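(* For every $1\le i<n$, the automorphism $T_i$ of ${\boldsymbol U}_{v}(\mathfrak q_n)$ satisfies $T_i({\boldsymbol U}_{v,\mathcal Z})={\boldsymbol U}_{v,\mathcal Z}$.
   Context: Let $v$ be an indeterminate. The quantum queer superalgebra ${\boldsymbol U}_{v}(\mathfrak q_n)$ is the associative superalgebra over $\mathbb Q(v)$ generated by even generators $\mathsf K_i,\mathsf K_i^{-1}$ ($1\le i\le n$), $\mathsf E_j,\mathsf F_j$ ($1\le j\le n-1$) and odd generators $\mathsf K_{\bar i}$ ($1\le i\le n$), $\mathsf E_{\bar j},\mathsf F_{\bar j}$ ($1\le j\le n-1$), subject to the following relations (indices are taken only where they make sense), where $(\epsilon_i,\alpha_j)=\delta_{i,j}-\delta_{i,j+1}$: (QQ1) $\mathsf K_i\mathsf K_i^{-1}=\mathsf K_i^{-1}\mathsf K_i=1$, $\mathsf K_i\mathsf K_j=\mathsf K_j\mathsf K_i$, $\mathsf K_i\mathsf K_{\bar j}=\mathsf K_{\bar j}\mathsf K_i$, $\mathsf K_{\bar i}\mathsf K_{\bar j}+\mathsf K_{\bar j}\mathsf K_{\bar i}=2\delta_{i,j}\frac{\mathsf K_i^2-\mathsf K_i^{-2}}{v^2-v^{-2}}$. (QQ2) $\mathsf K_i\mathsf E_j=v^{(\epsilon_i,\alpha_j)}\mathsf E_j\mathsf K_i$, $\mathsf K_i\mathsf E_{\bar j}=v^{(\epsilon_i,\alpha_j)}\mathsf E_{\bar j}\mathsf K_i$, $\mathsf K_i\mathsf F_j=v^{-(\epsilon_i,\alpha_j)}\mathsf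 F_j\mathsf K_i$, $\mathsf K_i\mathsf F_{\bar j}=v^{-(\epsilon_i,\alpha_j)}\mathsf F_{\bar j}\mathsf K_i$. (QQ3) $\mathsf K_{\bar i}\mathsf E_i-v\mathsf E_i\mathsf K_{\bar i}=\mathsf E_{\bar i}\mathsf K_i^{-1}$, $v\mathsf K_{\bar i}\mathsf E_{i-1}-\mathsf E_{i-1}\mathsf K_{\bar i}=-\mathsf K_i^{-1}\mathsf E_{\overline{i-1}}$, $\mathsf K_{\bar i}\mathsf F_i-v\mathsf F_i\mathsf K_{\bar i}=-\mathsf F_{\bar i}\mathsf K_i$, $v\mathsf K_{\bar i}\mathsf F_{i-1}-\mathsf F_{i-1}\mathsf K_{\bar i}=\mathsf K_i\mathsf F_{\overline{i-1}}$, $\mathsf K_{\bar i}\mathsf E_{\bar i}+v\mathsf E_{\bar i}\mathsf K_{\bar i}=\mathsf E_i\mathsf K_i^{-1}$, $v\mathsf K_{\bar i}\mathsf E_{\overline{i-1}}+\mathsf E_{\overline{i-1}}\mathsf K_{\bar i}=\mathsf K_i^{-1}\mathsf E_{i-1}$, $\mathsf K_{\bar i}\mathsf F_{\bar i}+v\mathsf F_{\bar i}\mathsf K_{\bar i}=\mathsf F_i\mathsf K_i$, $v\mathsf K_{\bar i}\mathsf F_{\overline{i-1}}+\mathsf F_{\overline{i-1}}\mathsf K_{\bar i}=\mathsf K_i\mathsf F_{i-1}$, and for $j\ne i,i-1$: $\mathsf K_{\bar i}\mathsf E_j=\mathsf E_j\mathsf K_{\bar i}$, $\mathsf K_{\bar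 i}\mathsf F_j=\mathsf F_j\mathsf K_{\bar i}$, $\mathsf K_{\bar i}\mathsf E_{\bar j}=-\mathsf E_{\bar j}\mathsf K_{\bar i}$, $\mathsf K_{\bar i}\mathsf F_{\bar j}=-\mathsf F_{\bar j}\mathsf K_{\bar i}$. (QQ4) $\mathsf E_i\mathsf F_j-\mathsf F_j\mathsf E_i=\delta_{i,j}\frac{\mathsf K_i\mathsf K_{i+1}^{-1}-\mathsf K_i^{-1}\mathsf K_{i+1}}{v-v^{-1}}$, $\mathsf E_{\bar i}\mathsf F_{\bar j}+\mathsf F_{\bar j}\mathsf E_{\bar i}=\delta_{i,j}\big(\frac{\mathsf K_i\mathsf K_{i+1}-\mathsf K_i^{-1}\mathsf K_{i+1}^{-1}}{v-v^{-1}}+(v-v^{-1})\mathsf K_{\bar i}\mathsf K_{\overline{i+1}}\big)$, $\mathsf E_i\mathsf F_{\bar j}-\mathsf F_{\bar j}\mathsf E_i=\delta_{i,j}(\mathsf K_{i+1}^{-1}\mathsf K_{\bar i}-\mathsf K_{\overline{i+1}}\mathsf K_i^{-1})$, $\mathsf E_{\bar i}\mathsf F_j-\mathsf F_j\mathsf E_{\bar i}=\delta_{i,j}(\mathsf K_{i+1}\mathsf K_{\bar i}-\mathsf K_{\overline{i+1}}\mathsf K_i)$. (QQ5) $\mathsf E_{\bar i}^2=-\frac{v-v^{-1}}{v+v^{-1}}\mathsf E_i^2$, $\mathsf F_{\bar i}^2=\frac{v-v^{-1}}{v+v^{-1}}\mathsf F_i^2$; for $|i-j|\ne1$: $\mathsf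 E_i\mathsf E_{\bar j}=\mathsf E_{\bar j}\mathsf E_i$, $\mathsf F_i\mathsf F_{\bar j}=\mathsf F_{\bar j}\mathsf F_i$; for $|i-j|>1$: $\mathsf E_i\mathsf E_j=\mathsf E_j\mathsf E_i$, $\mathsf F_i\mathsf F_j=\mathsf F_j\mathsf F_i$, $\mathsf E_{\bar i}\mathsf E_{\bar j}=-\mathsf E_{\bar j}\mathsf E_{\bar i}$, $\mathsf F_{\bar i}\mathsf F_{\bar j}=-\mathsf F_{\bar j}\mathsf F_{\bar i}$; $\mathsf E_i\mathsf E_{i+1}-v\mathsf E_{i+1}\mathsf E_i=\mathsf E_{\bar i}\mathsf E_{\overline{i+1}}+v\mathsf E_{\overline{i+1}}\mathsf E_{\bar i}$, $\mathsf E_i\mathsf E_{\overline{i+1}}-v\mathsf E_{\overline{i+1}}\mathsf E_i=\mathsf E_{\bar i}\mathsf E_{i+1}-v\mathsf E_{i+1}\mathsf E_{\bar i}$, $\mathsf F_i\mathsf F_{i+1}-v\mathsf F_{i+1}\mathsf F_i=-(\mathsf F_{\bar i}\mathsf F_{\overline{i+1}}+v\mathsf F_{\overline{i+1}}\mathsf F_{\bar i})$, $\mathsf F_i\mathsf F_{\overline{i+1}}-v\mathsf F_{\overline{i+1}}\mathsf F_i=\mathsf F_{\bar i}\mathsf F_{i+1}-v\mathsf F_{i+1}\mathsf F_{\bar i}$. (QQ6) for $|i-j|=1$: $\mathsf E_i^2X-(v+v^{-1})\mathsf E_iX\mathsf E_i+X\mathsf E_i^2=0$ for $X\in\{\mathsf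 E_j,\mathsf E_{\bar j}\}$ and $\mathsf F_i^2Y-(v+v^{-1})\mathsf F_iY\mathsf F_i+Y\mathsf F_i^2=0$ for $Y\in\{\mathsf F_j,\mathsf F_{\bar j}\}$. Notation: $[m]_v=\frac{v^m-v^{-m}}{v-v^{-1}}$, $[m]_v^!=[m]_v[m-1]_v\cdots[1]_v$, $[0]_v^!=1$; for $Y$ in a $\mathbb Q(v)$-algebra $Y^{(m)}=Y^m/[m]_v^!$; for invertible $Y$, $c\in\mathbb Z$, $t\ge1$: $\left[\begin{smallmatrix}Y;c\\ t\end{smallmatrix}\right]_v=\prod_{s=1}^t\frac{Yv^{c-s+1}-Y^{-1}v^{-c+s-1}}{v^s-v^{-s}}$, equal to $1$ for $t=0$; and $\left[\begin{smallmatrix}\mathsf K_i\\ t\end{smallmatrix}\right]_v=\left[\begin{smallmatrix}\mathsf K_i;0\\ t\end{smallmatrix}\right]_v$. Let $\mathcal Z=\mathbb Z[v,v^{-1}]$. The Lusztig integral form ${\boldsymbol U}_{v,\mathcal Z}$ is the $\mathcal Z$-subsuperalgebra of ${\boldsymbol U}_{v}(\mathfrak q_n)$ generated by $\mathsf K_i^{\pm1}$, $\left[\begin{smallmatrix}\mathsf K_i\\ t\end{smallmatrix}\right]_v$, $\mathsf K_{\bar i}$ ($1\le i\le n$, $t\in\mathbb N$), $\mathsf E_j^{(m)},\mathsf F_j^{(m)},\mathsf E_{\bar j},\mathsf F_{\bar j}$ ($1\le j\le n-1$, $m\in\mathbb N$). Braid automorphisms: for $1\le i\le n-1$, $T_i$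 denotes the $\mathbb Q(v)$-superalgebra automorphism of ${\boldsymbol U}_{v}(\mathfrak q_n)$ given on generators by: $T_i(\mathsf K_k^{\pm1})=\mathsf K_{s_i(k)}^{\pm1}$ ($s_i$ the transposition $(i,i+1)$); $T_i(\mathsf K_{\overline{i-1}})=\mathsf K_{\overline{i-1}}$, $T_i(\mathsf K_{\bar i})=\mathsf K_{\overline{i+1}}$, $T_i(\mathsf K_{\overline{i+1}})=(v-v^{-1})\mathsf K_{\overline{i+1}}\mathsf F_i\mathsf E_i-(v-v^{-1})\mathsf F_i\mathsf E_i\mathsf K_{\overline{i+1}}+\mathsf K_{\bar i}$; $T_i(\mathsf E_i)=-\mathsf F_i\mathsf K_i\mathsf K_{i+1}^{-1}$, $T_i(\mathsf F_i)=-\mathsf K_i^{-1}\mathsf K_{i+1}\mathsf E_i$, $T_i(\mathsf E_{\bar i})=-\mathsf K_{\overline{i+1}}\mathsf F_i\mathsf K_i+v\mathsf F_i\mathsf K_{\overline{i+1}}\mathsf K_i$, $T_i(\mathsf F_{\bar i})=-\mathsf K_i^{-1}\mathsf E_i\mathsf K_{\overline{i+1}}+v^{-1}\mathsf K_{\overline{i+1}}\mathsf K_i^{-1}\mathsf E_i$; for $|i-j|=1$: $T_i(\mathsf E_j)=-\mathsf E_i\mathsf E_j+v^{-1}\mathsf E_j\mathsf E_i$, $T_i(\mathsf F_j)=-\mathsf F_j\mathsf F_i+v\mathsf F_i\mathsf F_j$, $T_i(\mathsf E_{\bar j})=-\mathsf E_i\mathsf E_{\bar j}+v^{-1}\mathsf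 E_{\bar j}\mathsf E_i$, $T_i(\mathsf F_{\bar j})=-\mathsf F_{\bar j}\mathsf F_i+v\mathsf F_i\mathsf F_{\bar j}$; for $|i-j|>1$: $T_i$ fixes $\mathsf E_j,\mathsf F_j,\mathsf K_{\bar j},\mathsf E_{\bar j},\mathsf F_{\bar j}$. (That these assignments define an automorphism is part of the setting.) *)

theory Defs
  imports "HOL-Library.Poly_Mapping" "HOL-Computational_Algebra.Polynomial"
          "HOL-Computational_Algebra.Fraction_Field"
begin

section \<open>The base field Q(v) and the ring Z = Z[v,v^-1]\<close>

type_synonym qv = "rat poly fract"

definition vv :: qv where "vv = Fract [:0, 1:] 1"

definition vpow :: "int \<Rightarrow> qv" where
  "vpow k = (if 0 \<le> k then vv ^ nat k else inverse vv ^ nat (- k))"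

definition Zset :: "qv set" where
  "Zset = {c. \<exists>(p::int poly) (k::nat). c = Fract (map_poly of_int p) 1 / vv ^ k}"

definition qint :: "nat \<Rightarrow> qv" where
  "qint m = (vv ^ m - inverse vv ^ m) / (vv - inverse vv)"

definition qfact :: "nat \<Rightarrow> qv" where
  "qfact m = (\<Prod>k\<in>{1..m}. qint k)"

datatype gen = GK nat | GKi nat | GKb nat | GE nat | GF nat | GEb nat | GFb nat
  \<comment> \<open>GK i = K_i, GKi i = K_i^{-1}, GKb i = K_{bar i}, GE j = E_j, GF j = F_j,
      GEb j = E_{bar j}, GFb j = F_{bar j}\<close>

datatype 'a fword = FWord "'a list"

instantiation fword :: (type) monoid_add
begin
definition zero_fword_def: "0 = FWord []"
fun plus_fword :: "'a fword \<Rightarrow> 'a fword \<Rightarrow> 'a fword" where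
  "plus_fword (FWord a) (FWord b) = FWord (a @ b)"
instance
proof
  fix a b c :: "'a fword"
  show "a + b + c = a + (b + c)" by (cases a; cases b; cases c) auto
  show "0 + a = a" by (cases a) (auto simp: zero_fword_def)
  show "a + 0 = a" by (cases a) (auto simp: zero_fword_def)
qed
end

text \<open>Noncommutative polynomials: finitely supported functions from words to Q(v),
  with concatenation-convolution product.\<close>
type_synonym alg = "gen fword \<Rightarrow>\<^sub>0 qv"

definition sc :: "qv \<Rightarrow> alg" where "sc c = Poly_Mapping.single 0 c"

definition g :: "gen \<Rightarrow> alg" where "g x = Poly_Mapping.single (FWord [x]) 1"

abbreviation "Kg i \<equiv> g (GK i)"
abbreviation "Kig i \<equiv> g (GKi i)"
abbreviation "Kbg i \<equiv> g (GKb i)"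
abbreviation "Eg j \<equiv> g (GE j)"
abbreviation "Fg j \<equiv> g (GF j)"
abbreviation "Ebg j \<equiv> g (GEb j)"
abbreviation "Fbg j \<equiv> g (GFb j)"

fun word_eval :: "(gen \<Rightarrow> alg) \<Rightarrow> gen fword \<Rightarrow> alg" where
  "word_eval f (FWord l) = prod_list (map f l)"

definition hom_ext :: "(gen \<Rightarrow> alg) \<Rightarrow> alg \<Rightarrow> alg" where
  "hom_ext f x = (\<Sum>w\<in>Poly_Mapping.keys x. sc (Poly_Mapping.lookup x w) * word_eval f w)"

section \<open>Defining relations of U_v(q_n)\<close>

definition valid :: "nat \<Rightarrow> gen \<Rightarrow> bool" where
  "valid n x = (case x of
      GK i \<Rightarrow> 1 \<le> i \<and> i \<le> n | GKi i \<Rightarrow> 1 \<le> i \<and> i \<le> n | GKb i \<Rightarrow> 1 \<le> i \<and> i \<le> n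
    | GE j \<Rightarrow> 1 \<le> j \<and> j < n | GF j \<Rightarrow> 1 \<le> j \<and> j < n
    | GEb j \<Rightarrow> 1 \<le> j \<and> j < n | GFb j \<Rightarrow> 1 \<le> j \<and> j < n)"

definition pair :: "nat \<Rightarrow> nat \<Rightarrow> int" where
  "pair i j = (if i = j then 1 else 0) - (if i = j + 1 then 1 else 0)"
  \<comment> \<open>(epsilon_i, alpha_j)\<close>

definition dl :: "nat \<Rightarrow> nat \<Rightarrow> alg \<Rightarrow> alg" where
  "dl i j x = (if i = j then x else 0)"

abbreviation "vi \<equiv> inverse vv"

text \<open>Set of elements required to vanish (each relation written as LHS - RHS).
  Generators with out-of-range indices are set to zero, so the quotient is exactly
  U_v(q_n).\<close>
definition rels :: "nat \<Rightarrow> alg set" where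
  "rels n =
    {g x | x. \<not> valid n x}
  \<union> \<comment> \<open>QQ1\<close>
    (\<Union>i\<in>{1..n}. \<Union>j\<in>{1..n}.
      {Kg i * Kig i - 1, Kig i * Kg i - 1, Kg i * Kg j - Kg j * Kg i,
       Kg i * Kbg j - Kbg j * Kg i,
       Kbg i * Kbg j + Kbg j * Kbg i
         - dl i j (sc 2 * (Kg i ^ 2 - Kig i ^ 2) * sc (1 / (vv ^ 2 - vi ^ 2)))})
  \<union> \<comment> \<open>QQ2\<close>
    (\<Union>i\<in>{1..n}. \<Union>j\<in>{1..<n}.
      {Kg i * Eg j - sc (vpow (pair i j)) * Eg j * Kg i,
       Kg i * Ebg j - sc (vpow (pair i j)) * Ebg j * Kg i,
       Kg i * Fg j - sc (vpow (- pair i j)) * Fg j * Kg i,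
       Kg i * Fbg j - sc (vpow (- pair i j)) * Fbg j * Kg i})
  \<union> \<comment> \<open>QQ3, relations with E_i, F_i\<close>
    (\<Union>i\<in>{1..<n}.
      {Kbg i * Eg i - sc vv * Eg i * Kbg i - Ebg i * Kig i,
       Kbg i * Fg i - sc vv * Fg i * Kbg i + Fbg i * Kg i,
       Kbg i * Ebg i + sc vv * Ebg i * Kbg i - Eg i * Kig i,
       Kbg i * Fbg i + sc vv * Fbg i * Kbg i - Fg i * Kg i})
  \<union> \<comment> \<open>QQ3, relations with E_{i-1}, F_{i-1}\<close>
    (\<Union>i\<in>{2..n}.
      {sc vv * Kbg i * Eg (i - 1) - Eg (i - 1) * Kbg i + Kig i * Ebg (i - 1),
       sc vv * Kbg i * Fg (i - 1) - Fg (i - 1) * Kbg i - Kg i * Fbg (i - 1),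
       sc vv * Kbg i * Ebg (i - 1) + Ebg (i - 1) * Kbg i - Kig i * Eg (i - 1),
       sc vv * Kbg i * Fbg (i - 1) + Fbg (i - 1) * Kbg i - Kg i * Fg (i - 1)})
  \<union> \<comment> \<open>QQ3, j different from i, i-1\<close>
    (\<Union>i\<in>{1..n}. \<Union>j\<in>{j. 1 \<le> j \<and> j < n \<and> j \<noteq> i \<and> j + 1 \<noteq> i}.
      {Kbg i * Eg j - Eg j * Kbg i, Kbg i * Fg j - Fg j * Kbg i,
       Kbg i * Ebg j + Ebg j * Kbg i, Kbg i * Fbg j + Fbg j * Kbg i})
  \<union> \<comment> \<open>QQ4\<close>
    (\<Union>i\<in>{1..<n}. \<Union>j\<in>{1..<n}.
      {Eg i * Fg j - Fg j * Eg i
         - dl i j ((Kg i * Kig (i + 1) - Kig i * Kg (i + 1)) * sc (1 / (vv - vi))),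
       Ebg i * Fbg j + Fbg j * Ebg i
         - dl i j ((Kg i * Kg (i + 1) - Kig i * Kig (i + 1)) * sc (1 / (vv - vi))
                   + sc (vv - vi) * Kbg i * Kbg (i + 1)),
       Eg i * Fbg j - Fbg j * Eg i - dl i j (Kig (i + 1) * Kbg i - Kbg (i + 1) * Kig i),
       Ebg i * Fg j - Fg j * Ebg i - dl i j (Kg (i + 1) * Kbg i - Kbg (i + 1) * Kg i)})
  \<union> \<comment> \<open>QQ5, squares\<close>
    (\<Union>i\<in>{1..<n}.
      {Ebg i ^ 2 + sc ((vv - vi) / (vv + vi)) * Eg i ^ 2,
       Fbg i ^ 2 - sc ((vv - vi) / (vv + vi)) * Fg i ^ 2})
  \<union> \<comment> \<open>QQ5, |i-j| \<noteq> 1\<close>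
    (\<Union>i\<in>{1..<n}. \<Union>j\<in>{j. 1 \<le> j \<and> j < n \<and> i + 1 \<noteq> j \<and> j + 1 \<noteq> i}.
      {Eg i * Ebg j - Ebg j * Eg i, Fg i * Fbg j - Fbg j * Fg i})
  \<union> \<comment> \<open>QQ5, |i-j| > 1\<close>
    (\<Union>i\<in>{1..<n}. \<Union>j\<in>{j. 1 \<le> j \<and> j < n \<and> (i + 1 < j \<or> j + 1 < i)}.
      {Eg i * Eg j - Eg j * Eg i, Fg i * Fg j - Fg j * Fg i,
       Ebg i * Ebg j + Ebg j * Ebg i, Fbg i * Fbg j + Fbg j * Fbg i})
  \<union> \<comment> \<open>QQ5, consecutive indices\<close>
    (\<Union>i\<in>{i. 1 \<le> i \<and> i + 1 < n}.
      {Eg i * Eg (i + 1) - sc vv * Eg (i + 1) * Eg i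
         - (Ebg i * Ebg (i + 1) + sc vv * Ebg (i + 1) * Ebg i),
       Eg i * Ebg (i + 1) - sc vv * Ebg (i + 1) * Eg i
         - (Ebg i * Eg (i + 1) - sc vv * Eg (i + 1) * Ebg i),
       Fg i * Fg (i + 1) - sc vv * Fg (i + 1) * Fg i
         + (Fbg i * Fbg (i + 1) + sc vv * Fbg (i + 1) * Fbg i),
       Fg i * Fbg (i + 1) - sc vv * Fbg (i + 1) * Fg i
         - (Fbg i * Fg (i + 1) - sc vv * Fg (i + 1) * Fbg i)})
  \<union> \<comment> \<open>QQ6\<close>
    (\<Union>i\<in>{1..<n}. \<Union>j\<in>{j. 1 \<le> j \<and> j < n \<and> (i + 1 = j \<or> j + 1 = i)}.
      (\<Union>X\<in>{Eg j, Ebg j}. {Eg i ^ 2 * X - sc (vv + vi) * Eg i * X * Eg i + X * Eg i ^ 2})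
    \<union> (\<Union>Y\<in>{Fg j, Fbg j}. {Fg i ^ 2 * Y - sc (vv + vi) * Fg i * Y * Fg i + Y * Fg i ^ 2}))"

text \<open>Two-sided ideal of the free algebra generated by the relations;
  U_v(q_n) is the quotient of the free algebra by it.\<close>
inductive_set rel_ideal :: "nat \<Rightarrow> alg set" for n where
  gen: "r \<in> rels n \<Longrightarrow> r \<in> rel_ideal n"
| zero: "0 \<in> rel_ideal n"
| add: "a \<in> rel_ideal n \<Longrightarrow> b \<in> rel_ideal n \<Longrightarrow> a + b \<in> rel_ideal n"
| mult: "a \<in> rel_ideal n \<Longrightarrow> x * a * y \<in> rel_ideal n"

section \<open>Lusztig integral form\<close>

definition qbinK :: "nat \<Rightarrow> nat \<Rightarrow> alg" where
  "qbinK i t = prod_list (map (\<lambda>s.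
     (Kg i * sc (vpow (1 - int s)) - Kig i * sc (vpow (int s - 1))) * sc (1 / (vv ^ s - vi ^ s)))
     [1..<t + 1])"
  \<comment> \<open>[K_i; 0; t]_v, lifted to the free algebra\<close>

definition UZ_gens :: "nat \<Rightarrow> alg set" where
  "UZ_gens n =
     (\<Union>i\<in>{1..n}. {Kg i, Kig i, Kbg i} \<union> {qbinK i t | t. True})
   \<union> (\<Union>j\<in>{1..<n}. {Ebg j, Fbg j} \<union> {sc (1 / qfact m) * Eg j ^ m | m. True}
                                  \<union> {sc (1 / qfact m) * Fg j ^ m | m. True})"

inductive_set zsubalg :: "alg set \<Rightarrow> alg set" for S where
  one: "1 \<in> zsubalg S"
| gen: "s \<in> S \<Longrightarrow> s \<in> zsubalg S"
| smult: "c \<in> Zset \<Longrightarrow> a \<in> zsubalg S \<Longrightarrow> sc c * a \<in> zsubalg S"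
| add: "a \<in> zsubalg S \<Longrightarrow> b \<in> zsubalg S \<Longrightarrow> a + b \<in> zsubalg S"
| mult: "a \<in> zsubalg S \<Longrightarrow> b \<in> zsubalg S \<Longrightarrow> a * b \<in> zsubalg S"

definition UZ :: "nat \<Rightarrow> alg set" where "UZ n = zsubalg (UZ_gens n)"

section \<open>Braid automorphism T_i, on generators\<close>

definition swp :: "nat \<Rightarrow> nat \<Rightarrow> nat" where
  "swp i k = (if k = i then i + 1 else if k = i + 1 then i else k)"

fun Tg :: "nat \<Rightarrow> gen \<Rightarrow> alg" where
  "Tg i (GK k) = Kg (swp i k)"
| "Tg i (GKi k) = Kig (swp i k)"
| "Tg i (GKb k) =
     (if k = i then Kbg (i + 1)
      else if k = i + 1 then sc (vv - vi) * Kbg (i + 1) * Fg i * Eg i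
                            - sc (vv - vi) * Fg i * Eg i * Kbg (i + 1) + Kbg i
      else Kbg k)"
| "Tg i (GE j) =
     (if j = i then - Fg i * Kg i * Kig (i + 1)
      else if i + 1 = j \<or> j + 1 = i then - Eg i * Eg j + sc vi * Eg j * Eg i
      else Eg j)"
| "Tg i (GF j) =
     (if j = i then - Kig i * Kg (i + 1) * Eg i
      else if i + 1 = j \<or> j + 1 = i then - Fg j * Fg i + sc vv * Fg i * Fg j
      else Fg j)"
| "Tg i (GEb j) =
     (if j = i then - Kbg (i + 1) * Fg i * Kg i + sc vv * Fg i * Kbg (i + 1) * Kg i
      else if i + 1 = j \<or> j + 1 = i then - Eg i * Ebg j + sc vi * Ebg j * Eg i
      else Ebg j)"
| "Tg i (GFb j) =
     (if j = i then - Kig i * Eg i * Kbg (i + 1) + sc vi * Kbg (i + 1) * Kig i * Eg i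
      else if i + 1 = j \<or> j + 1 = i then - Fbg j * Fg i + sc vv * Fg i * Fbg j
      else Fbg j)"

definition Tfree :: "nat \<Rightarrow> alg \<Rightarrow> alg" where "Tfree i = hom_ext (Tg i)"

end

theory Submission
  imports Defs
begin

text \<open>
  Write \<open>M = U_Z + I\<close> for the integral form modulo the defining ideal \<open>I\<close>, and
  \<open>S = T_i(U_Z) + I\<close>.  Both are \<open>\<int>[v,v^-1]\<close>-subalgebras closed under congruence modulo \<open>I\<close>,
  and \<open>T_i\<close> is an algebra map, so it suffices that \<open>T_i\<close> maps each generator of \<open>U_Z\<close> into \<open>M\<close>
  and that each generator of \<open>U_Z\<close> lies in \<open>S\<close>.

  The essential case is
  a divided power \<open>W^(m)\<close> of a \<open>q\<close>-commutator \<open>W = AB - q^-1 BA\<close>, \<open>q \<in> {v, v^-1}\<close>, that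
  \<open>q\<close>-commutes with \<open>A\<close> and \<open>B\<close>; by the Serre relations this is the situation of
  \<open>T_i(E_j) = -(E_i E_j - v^-1 E_j E_i)\<close> for \<open>|i - j| = 1\<close>.  Then
  \<open>A^(a) B^(b) = \<Sum>_k q^-(a-k)(b-k) B^(b-k) W^(k) A^(a-k)\<close>, and for \<open>a = b = m\<close> the term
  \<open>k = m\<close> is \<open>W^(m)\<close>, so by induction on \<open>m\<close> every \<open>W^(m)\<close> lies in any such subalgebra
  containing all \<open>A^(a)\<close> and \<open>B^(b)\<close>.  For the reverse inclusion the same argument is applied
  to \<open>A = -T_i(E_j)\<close> and \<open>B = -T_i(E_i)\<close>, whose \<open>v\<close>-commutator is \<open>-E_j\<close>; the odd generators are
  recovered from the relations (QQ3) and the formula for \<open>T_i(K_{bar(i+1)})\<close>.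
\<close>

lemma vv_power: "vv ^ k = Fract ([:0, 1:] ^ k) 1"
  unfolding vv_def by (induct k) (simp_all add: mult_fract One_fract_def)

lemma vv_neq_0 [simp]: "vv \<noteq> 0"
  unfolding vv_def by (simp add: Zero_fract_def eq_fract)

lemma vv_power_neq_1: "k > 0 \<Longrightarrow> vv ^ k \<noteq> 1"
proof
  assume "k > 0" and "vv ^ k = 1"
  then have "([:0, 1:] :: rat poly) ^ k = 1"
    by (simp add: vv_power One_fract_def eq_fract)
  then have "degree (([:0, 1:] :: rat poly) ^ k) = 0" by simp
  with \<open>k > 0\<close> show False by (simp add: degree_power_eq)
qed

lemma vv_diff_inverse_neq_0: "vv - inverse vv \<noteq> 0"
proof
  assume "vv - inverse vv = 0"
  then have "vv * vv = inverse vv * vv" by simp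
  then have "vv ^ 2 = 1" by (simp add: power2_eq_square)
  then show False using vv_power_neq_1[of 2] by simp
qed

text \<open>The computations for \<open>E\<close> and for \<open>F\<close> differ by exchanging \<open>v\<close> and \<open>v^-1\<close>.\<close>
definition vparam :: "qv set" where "vparam = {vv, inverse vv}"

lemma vparam_inverse: "q \<in> vparam \<Longrightarrow> inverse q \<in> vparam"
  by (auto simp: vparam_def)

lemma vparam_neq_0: "q \<in> vparam \<Longrightarrow> q \<noteq> 0"
  by (auto simp: vparam_def)

lemma vparam_diff_inverse_neq_0: "q \<in> vparam \<Longrightarrow> q - inverse q \<noteq> 0"
  using vv_diff_inverse_neq_0 by (auto simp: vparam_def)

lemma qint_vparam: "q \<in> vparam \<Longrightarrow> qint m = (q ^ m - inverse q ^ m) / (q - inverse q)"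
proof -
  have "(vv ^ m - inverse vv ^ m) / (vv - inverse vv)
      = (- (vv ^ m - inverse vv ^ m)) / (- (vv - inverse vv))"
    by (rule minus_divide_divide[symmetric])
  then show "q \<in> vparam \<Longrightarrow> ?thesis" by (auto simp: vparam_def qint_def)
qed

lemma qint_0 [simp]: "qint 0 = 0"
  by (simp add: qint_def)

lemma qint_1 [simp]: "qint (Suc 0) = 1"
  using vv_diff_inverse_neq_0 by (simp add: qint_def)

lemma qint_neq_0: "m > 0 \<Longrightarrow> qint m \<noteq> 0"
proof
  assume "m > 0" and "qint m = 0"
  then have "vv ^ m = inverse vv ^ m" using vv_diff_inverse_neq_0 by (simp add: qint_def)
  then have "vv ^ m * vv ^ m = vv ^ m * inverse (vv ^ m)" by (simp add: power_inverse)
  then have "vv ^ m * vv ^ m = 1" by simp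
  then have "vv ^ (2 * m) = 1" by (simp only: mult_2 power_add)
  with \<open>m > 0\<close> show False using vv_power_neq_1[of "2 * m"] by simp
qed

lemma qint_add: "q \<in> vparam \<Longrightarrow> q ^ k * qint m + inverse q ^ m * qint k = qint (m + k)"
  using vparam_diff_inverse_neq_0[of q]
  by (simp add: qint_vparam divide_simps power_add algebra_simps)

lemma qfact_0 [simp]: "qfact 0 = 1"
  by (simp add: qfact_def)

lemma qfact_Suc: "qfact (Suc m) = qint (Suc m) * qfact m"
  unfolding qfact_def by (simp add: prod.nat_ivl_Suc' mult.commute)

lemma qfact_neq_0: "qfact m \<noteq> 0"
  by (induct m) (auto simp: qfact_Suc qint_neq_0)

lemma qint_div_qfact_Suc: "qint (Suc m) / qfact (Suc m) = 1 / qfact m"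
  using qint_neq_0[of "Suc m"] qfact_neq_0[of m] by (simp add: qfact_Suc)

lemma Zset_vv_power: "vv ^ k \<in> Zset"
proof -
  have "map_poly of_int (monom (1::int) k) = (monom 1 k :: rat poly)"
    by (simp add: map_poly_monom)
  also have "\<dots> = [:0, 1:] ^ k" by (simp add: monom_altdef)
  finally have "vv ^ k = Fract (map_poly of_int (monom 1 k)) 1 / vv ^ 0"
    by (simp add: vv_power)
  then show ?thesis unfolding Zset_def by blast
qed

lemma Zset_inverse_vv_power: "inverse vv ^ k \<in> Zset"
proof -
  have "inverse vv ^ k = Fract (map_poly of_int 1) 1 / vv ^ k"
    by (simp add: One_fract_def[symmetric] power_inverse divide_inverse)
  then show ?thesis unfolding Zset_def by blast
qed

lemma Zset_minus_1: "-1 \<in> Zset"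
proof -
  have "map_poly of_int (monom (-1::int) 0) = (monom (-1) 0 :: rat poly)"
    by (simp add: map_poly_monom)
  also have "\<dots> = - 1" by (simp add: monom_0 one_pCons)
  finally have "(-1::qv) = Fract (map_poly of_int (monom (-1) 0)) 1 / vv ^ 0"
    by (simp add: One_fract_def)
  then show ?thesis unfolding Zset_def by blast
qed

lemma Zset_0: "0 \<in> Zset"
proof -
  have "(0::qv) = Fract (map_poly of_int 0) 1 / vv ^ 0" by (simp add: Zero_fract_def)
  then show ?thesis unfolding Zset_def by blast
qed

lemma Zset_minus_1_power: "(-1) ^ m \<in> Zset"
  using Zset_vv_power[of 0] Zset_minus_1 by (cases "even m") simp_all

lemma Zset_vparam_power: "q \<in> vparam \<Longrightarrow> q ^ k \<in> Zset"
  by (auto simp: vparam_def Zset_vv_power Zset_inverse_vv_power)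

lemma Zset_vv: "vv \<in> Zset"
  using Zset_vv_power[of 1] by simp

lemma Zset_inverse_vv: "inverse vv \<in> Zset"
  using Zset_inverse_vv_power[of 1] by simp

lemma vpow_nonzero: "vpow z \<noteq> 0"
  by (simp add: vpow_def)

lemma vpow_0 [simp]: "vpow 0 = 1" by (simp add: vpow_def)
lemma vpow_1 [simp]: "vpow 1 = vv" by (simp add: vpow_def)
lemma vpow_minus_1 [simp]: "vpow (-1) = inverse vv" by (simp add: vpow_def)

lemma Zset_vv_square_power: "(vv * vv) ^ s \<in> Zset"
  using Zset_vv_power[of "s + s"] by (simp add: power_mult_distrib power_add)

lemma Zset_inverse_vv_square_power: "(inverse vv * inverse vv) ^ s \<in> Zset"
  using Zset_inverse_vv_power[of "s + s"] by (simp add: power_mult_distrib power_add)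

lemma vv_square_inverse_power: "(inverse vv * inverse vv) ^ s * (vv * vv) ^ s = 1"
proof -
  have "inverse vv * inverse vv * (vv * vv) = 1" by (simp add: field_simps)
  then show ?thesis by (simp add: power_mult_distrib[symmetric])
qed

lemma minus_one_power_square: "((-1::qv) ^ m) * ((-1) ^ m) = 1"
  by (simp add: power_mult_distrib[symmetric])

lemma poly_mapping_sum_single:
  fixes x :: "'a \<Rightarrow>\<^sub>0 'b::comm_monoid_add"
  shows "(\<Sum>w\<in>Poly_Mapping.keys x. Poly_Mapping.single w (Poly_Mapping.lookup x w)) = x"
proof (rule poly_mapping_eqI)
  fix k
  have "Poly_Mapping.lookup (\<Sum>w\<in>Poly_Mapping.keys x. Poly_Mapping.single w (Poly_Mapping.lookup x w)) k
      = (if k \<in> Poly_Mapping.keys x then Poly_Mapping.lookup x k else 0)"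
    by (simp add: lookup_sum lookup_single when_def sum.delta)
  also have "\<dots> = Poly_Mapping.lookup x k" by (auto simp: in_keys_iff)
  finally show "Poly_Mapping.lookup (\<Sum>w\<in>Poly_Mapping.keys x. Poly_Mapping.single w (Poly_Mapping.lookup x w)) k
      = Poly_Mapping.lookup x k" .
qed

lemma sc_commute: "sc c * x = x * sc c"
proof -
  have "sc c * x = (\<Sum>w\<in>Poly_Mapping.keys x. sc c * Poly_Mapping.single w (Poly_Mapping.lookup x w))"
    by (subst poly_mapping_sum_single[of x, symmetric]) (simp add: sum_distrib_left)
  also have "\<dots> = (\<Sum>w\<in>Poly_Mapping.keys x. Poly_Mapping.single w (Poly_Mapping.lookup x w) * sc c)"
    by (simp add: sc_def mult_single mult.commute)
  also have "\<dots> = x * sc c"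
    by (subst (2) poly_mapping_sum_single[of x, symmetric]) (simp add: sum_distrib_right)
  finally show ?thesis .
qed

lemma sc_mult: "sc a * sc b = sc (a * b)" by (simp add: sc_def mult_single)
lemma sc_add: "sc (a + b) = sc a + sc b" by (simp add: sc_def single_add)
lemma sc_diff: "sc (a - b) = sc a - sc b" by (simp add: sc_def single_diff)
lemma sc_uminus: "sc (- a) = - sc a" by (simp add: sc_def single_uminus)
lemma sc_1 [simp]: "sc 1 = 1" by (simp add: sc_def)
lemma sc_0 [simp]: "sc 0 = 0" by (simp add: sc_def)

lemma sc_right_commute: "NO_MATCH (sc d) x \<Longrightarrow> x * sc c = sc c * x"
  by (simp add: sc_commute)

lemma sc_left_commute: "NO_MATCH (sc d) x \<Longrightarrow> x * (sc c * y) = sc c * (x * y)"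
  by (metis mult.assoc sc_commute)

lemma sc_mult_assoc: "sc a * (sc b * y) = sc (a * b) * y"
  by (metis mult.assoc sc_mult)

text \<open>Rewriting with these moves all scalars to the front and merges them.\<close>
lemmas sc_normalize = sc_right_commute sc_left_commute sc_mult_assoc sc_mult sc_add sc_diff sc_uminus

lemma word_eval_plus: "word_eval f (u + w) = word_eval f u * word_eval f w"
  by (cases u; cases w) auto

lemma word_eval_zero: "word_eval f 0 = 1"
  by (simp add: zero_fword_def)

lemma hom_ext_superset:
  assumes "finite A" "Poly_Mapping.keys x \<subseteq> A"
  shows "hom_ext f x = (\<Sum>w\<in>A. sc (Poly_Mapping.lookup x w) * word_eval f w)"
  unfolding hom_ext_def
  by (rule sum.mono_neutral_left) (use assms in \<open>auto simp: in_keys_iff\<close>)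

lemma hom_ext_0 [simp]: "hom_ext f 0 = 0"
  by (simp add: hom_ext_def)

lemma hom_ext_add: "hom_ext f (x + y) = hom_ext f x + hom_ext f y"
proof -
  let ?A = "Poly_Mapping.keys x \<union> Poly_Mapping.keys y"
  have "hom_ext f (x + y) = (\<Sum>w\<in>?A. sc (Poly_Mapping.lookup (x + y) w) * word_eval f w)"
    by (rule hom_ext_superset) (auto simp: keys_add)
  also have "\<dots> = (\<Sum>w\<in>?A. sc (Poly_Mapping.lookup x w) * word_eval f w)
                 + (\<Sum>w\<in>?A. sc (Poly_Mapping.lookup y w) * word_eval f w)"
    by (simp add: lookup_add sc_add distrib_right sum.distrib)
  also have "\<dots> = hom_ext f x + hom_ext f y"
    by (simp add: hom_ext_superset[symmetric])
  finally show ?thesis .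
qed

lemma hom_ext_sum: "hom_ext f (sum h A) = (\<Sum>a\<in>A. hom_ext f (h a))"
  by (induct A rule: infinite_finite_induct) (auto simp: hom_ext_add)

lemma hom_ext_single: "hom_ext f (Poly_Mapping.single w c) = sc c * word_eval f w"
  by (cases "c = 0") (auto simp: hom_ext_def)

lemma hom_ext_mult: "hom_ext f (x * y) = hom_ext f x * hom_ext f y"
proof -
  let ?m = "\<lambda>z w. Poly_Mapping.single w (Poly_Mapping.lookup z w)"
  have "x * y = (\<Sum>u\<in>Poly_Mapping.keys x. ?m x u) * (\<Sum>w\<in>Poly_Mapping.keys y. ?m y w)"
    by (simp only: poly_mapping_sum_single)
  also have "\<dots> = (\<Sum>u\<in>Poly_Mapping.keys x. \<Sum>w\<in>Poly_Mapping.keys y. ?m x u * ?m y w)"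
    by (simp only: sum_distrib_left sum_distrib_right) (rule sum.swap)
  finally have "hom_ext f (x * y) = (\<Sum>u\<in>Poly_Mapping.keys x. \<Sum>w\<in>Poly_Mapping.keys y.
      sc (Poly_Mapping.lookup x u) * word_eval f u * (sc (Poly_Mapping.lookup y w) * word_eval f w))"
    by (simp add: hom_ext_sum mult_single hom_ext_single word_eval_plus sc_normalize mult.assoc)
  also have "\<dots> = hom_ext f x * hom_ext f y"
    by (simp only: hom_ext_def sum_distrib_left sum_distrib_right) (rule sum.swap)
  finally show ?thesis .
qed

lemma hom_ext_sc: "hom_ext f (sc c) = sc c"
  by (simp add: sc_def hom_ext_single word_eval_zero)

lemma hom_ext_1: "hom_ext f 1 = 1"
  using hom_ext_sc[of f 1] by (simp only: sc_1)

lemma hom_ext_g: "hom_ext f (g x) = f x"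
  by (simp add: g_def hom_ext_single)

lemma hom_ext_uminus: "hom_ext f (- x) = - hom_ext f x"
proof -
  have "hom_ext f (- x) + hom_ext f x = 0"
    by (simp only: hom_ext_add[symmetric] add.left_inverse hom_ext_0)
  then show ?thesis by (simp only: eq_neg_iff_add_eq_0)
qed

lemma hom_ext_diff: "hom_ext f (x - y) = hom_ext f x - hom_ext f y"
  by (simp only: diff_conv_add_uminus hom_ext_add hom_ext_uminus)

lemma hom_ext_power: "hom_ext f (x ^ m) = hom_ext f x ^ m"
  by (induct m) (simp_all only: power_0 power_Suc hom_ext_1 hom_ext_mult)

lemma hom_ext_prod_list: "hom_ext f (prod_list xs) = prod_list (map (hom_ext f) xs)"
  by (induct xs) (simp_all only: prod_list.Nil prod_list.Cons list.map hom_ext_1 hom_ext_mult)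

lemma Tfree_add: "Tfree i (x + y) = Tfree i x + Tfree i y" by (simp add: Tfree_def hom_ext_add)
lemma Tfree_mult: "Tfree i (x * y) = Tfree i x * Tfree i y" by (simp add: Tfree_def hom_ext_mult)
lemma Tfree_sc: "Tfree i (sc c) = sc c" by (simp add: Tfree_def hom_ext_sc)
lemma Tfree_1: "Tfree i 1 = 1" by (simp only: Tfree_def hom_ext_1)
lemma Tfree_g: "Tfree i (g x) = Tg i x" by (simp add: Tfree_def hom_ext_g)
lemma Tfree_diff: "Tfree i (x - y) = Tfree i x - Tfree i y" by (simp only: Tfree_def hom_ext_diff)
lemma Tfree_power: "Tfree i (x ^ m) = Tfree i x ^ m" by (simp only: Tfree_def hom_ext_power)
lemma Tfree_prod_list: "Tfree i (prod_list xs) = prod_list (map (Tfree i) xs)"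
  by (simp only: Tfree_def hom_ext_prod_list)

lemma rel_ideal_mult_left: "a \<in> rel_ideal n \<Longrightarrow> x * a \<in> rel_ideal n"
  using rel_ideal.mult[of a n x 1] by simp

lemma rel_ideal_mult_right: "a \<in> rel_ideal n \<Longrightarrow> a * y \<in> rel_ideal n"
  using rel_ideal.mult[of a n 1 y] by simp

lemma rel_ideal_uminus: "a \<in> rel_ideal n \<Longrightarrow> - a \<in> rel_ideal n"
  using rel_ideal_mult_left[of a n "-1"] by simp

lemma rel_ideal_diff: "a \<in> rel_ideal n \<Longrightarrow> b \<in> rel_ideal n \<Longrightarrow> a - b \<in> rel_ideal n"
  using rel_ideal.add[OF _ rel_ideal_uminus, of a n b] by (simp only: diff_conv_add_uminus)

definition rel_cong :: "nat \<Rightarrow> alg \<Rightarrow> alg \<Rightarrow> bool" where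
  "rel_cong n a b \<longleftrightarrow> a - b \<in> rel_ideal n"

lemma rel_cong_refl [simp]: "rel_cong n a a"
  by (simp add: rel_cong_def rel_ideal.zero)

lemma rel_cong_sym: "rel_cong n a b \<Longrightarrow> rel_cong n b a"
  unfolding rel_cong_def using rel_ideal_uminus by fastforce

lemma rel_cong_trans [trans]: "rel_cong n a b \<Longrightarrow> rel_cong n b c \<Longrightarrow> rel_cong n a c"
  unfolding rel_cong_def using rel_ideal.add by fastforce

text \<open>Without these, calculations mixing \<open>=\<close> and \<open>rel_cong\<close> fall back on the generic
  substitution rules, whose higher-order unification is very slow on the large terms below.\<close>
lemma rel_cong_eq_trans [trans]: "rel_cong n a b \<Longrightarrow> b = c \<Longrightarrow> rel_cong n a c"
  by simp

lemma eq_rel_cong_trans [trans]: "a = b \<Longrightarrow> rel_cong n b c \<Longrightarrow> rel_cong n a c"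
  by simp

lemma rel_cong_add: "rel_cong n a b \<Longrightarrow> rel_cong n c d \<Longrightarrow> rel_cong n (a + c) (b + d)"
  unfolding rel_cong_def using rel_ideal.add by (fastforce simp: algebra_simps)

lemma rel_cong_diff: "rel_cong n a b \<Longrightarrow> rel_cong n c d \<Longrightarrow> rel_cong n (a - c) (b - d)"
  unfolding rel_cong_def using rel_ideal_diff by (fastforce simp: algebra_simps)

lemma rel_cong_uminus: "rel_cong n a b \<Longrightarrow> rel_cong n (- a) (- b)"
  unfolding rel_cong_def using rel_ideal_uminus by (fastforce simp: algebra_simps)

lemma rel_cong_mult_left: "rel_cong n a b \<Longrightarrow> rel_cong n (x * a) (x * b)"
  unfolding rel_cong_def using rel_ideal_mult_left by (fastforce simp: algebra_simps)

lemma rel_cong_mult_right: "rel_cong n a b \<Longrightarrow> rel_cong n (a * x) (b * x)"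
  unfolding rel_cong_def using rel_ideal_mult_right by (fastforce simp: algebra_simps)

lemma rel_cong_mult: "rel_cong n a b \<Longrightarrow> rel_cong n c d \<Longrightarrow> rel_cong n (a * c) (b * d)"
  by (meson rel_cong_mult_left rel_cong_mult_right rel_cong_trans)

lemma rel_cong_sum:
  "(\<And>k. k \<in> A \<Longrightarrow> rel_cong n (f k) (h k)) \<Longrightarrow> rel_cong n (sum f A) (sum h A)"
  by (induct A rule: infinite_finite_induct) (auto intro: rel_cong_add)

lemma rel_cong_by_diff: "rel_cong n c d \<Longrightarrow> a - b = c - d \<Longrightarrow> rel_cong n a b"
  by (simp add: rel_cong_def)

lemma rel_K_Kinv: "k \<in> {1..n} \<Longrightarrow> rel_cong n (Kg k * Kig k) 1"
  unfolding rel_cong_def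
  by (rule rel_ideal.gen) (unfold rels_def, (rule UnI1 UnI2 UN_I insertI1 insertI2; assumption?)+)

lemma rel_Kinv_K: "k \<in> {1..n} \<Longrightarrow> rel_cong n (Kig k * Kg k) 1"
  unfolding rel_cong_def
  by (rule rel_ideal.gen) (unfold rels_def, (rule UnI1 UnI2 UN_I insertI1 insertI2; assumption?)+)

lemma rel_K_K: "k \<in> {1..n} \<Longrightarrow> l \<in> {1..n} \<Longrightarrow> rel_cong n (Kg k * Kg l) (Kg l * Kg k)"
  unfolding rel_cong_def
  by (rule rel_ideal.gen) (unfold rels_def, (rule UnI1 UnI2 UN_I insertI1 insertI2; assumption?)+)

lemma rel_K_E: "k \<in> {1..n} \<Longrightarrow> j \<in> {1..<n} \<Longrightarrow>
    rel_cong n (Kg k * Eg j) (sc (vpow (pair k j)) * Eg j * Kg k)"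
  unfolding rel_cong_def
  by (rule rel_ideal.gen) (unfold rels_def, (rule UnI1 UnI2 UN_I insertI1 insertI2; assumption?)+)

lemma rel_K_F: "k \<in> {1..n} \<Longrightarrow> j \<in> {1..<n} \<Longrightarrow>
    rel_cong n (Kg k * Fg j) (sc (vpow (- pair k j)) * Fg j * Kg k)"
  unfolding rel_cong_def
  by (rule rel_ideal.gen) (unfold rels_def, (rule UnI1 UnI2 UN_I insertI1 insertI2; assumption?)+)

lemma rel_Kbar_E: "j \<in> {1..<n} \<Longrightarrow>
    rel_cong n (Kbg j * Eg j - sc vv * Eg j * Kbg j - Ebg j * Kig j) 0"
  unfolding rel_cong_def
  by (simp only: diff_zero, rule rel_ideal.gen)
     (unfold rels_def, (rule UnI1 UnI2 UN_I insertI1 insertI2; assumption?)+)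

lemma rel_Kbar_F: "j \<in> {1..<n} \<Longrightarrow>
    rel_cong n (Kbg j * Fg j - sc vv * Fg j * Kbg j + Fbg j * Kg j) 0"
  unfolding rel_cong_def
  by (simp only: diff_zero, rule rel_ideal.gen)
     (unfold rels_def, (rule UnI1 UnI2 UN_I insertI1 insertI2; assumption?)+)

lemma rel_E_F: "k \<in> {1..<n} \<Longrightarrow> j \<in> {1..<n} \<Longrightarrow>
    rel_cong n (Eg k * Fg j - Fg j * Eg k
      - dl k j ((Kg k * Kig (k + 1) - Kig k * Kg (k + 1)) * sc (1 / (vv - inverse vv)))) 0"
  unfolding rel_cong_def
  by (simp only: diff_zero, rule rel_ideal.gen)
     (unfold rels_def, (rule UnI1 UnI2 UN_I insertI1 insertI2; assumption?)+)

lemma rel_Serre_E: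
  assumes "k \<in> {1..<n}" "j \<in> {1..<n}" "k + 1 = j \<or> j + 1 = k"
  shows "rel_cong n (Eg k ^ 2 * Eg j - sc (vv + inverse vv) * Eg k * Eg j * Eg k + Eg j * Eg k ^ 2) 0"
proof -
  have "j \<in> {j. 1 \<le> j \<and> j < n \<and> (k + 1 = j \<or> j + 1 = k)}" using assms by auto
  with assms(1) show ?thesis
    unfolding rel_cong_def diff_zero
    by - (rule rel_ideal.gen, unfold rels_def, (rule UnI1 UnI2 UN_I insertI1 insertI2; assumption?)+)
qed

lemma rel_Serre_F:
  assumes "k \<in> {1..<n}" "j \<in> {1..<n}" "k + 1 = j \<or> j + 1 = k"
  shows "rel_cong n (Fg k ^ 2 * Fg j - sc (vv + inverse vv) * Fg k * Fg j * Fg k + Fg j * Fg k ^ 2) 0"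
proof -
  have "j \<in> {j. 1 \<le> j \<and> j < n \<and> (k + 1 = j \<or> j + 1 = k)}" using assms by auto
  with assms(1) show ?thesis
    unfolding rel_cong_def diff_zero
    by - (rule rel_ideal.gen, unfold rels_def, (rule UnI1 UnI2 UN_I insertI1 insertI2; assumption?)+)
qed

section \<open>\<open>q\<close>-commutation and divided powers\<close>

definition qcommutes :: "nat \<Rightarrow> alg \<Rightarrow> alg \<Rightarrow> qv \<Rightarrow> bool" where
  "qcommutes n P Y c \<longleftrightarrow> rel_cong n (P * Y) (sc c * (Y * P))"

lemma qcommutes_mult_left:
  assumes "qcommutes n P1 Y c1" "qcommutes n P2 Y c2"
  shows "qcommutes n (P1 * P2) Y (c1 * c2)"
proof -
  have "P1 * P2 * Y = P1 * (P2 * Y)" by (simp add: mult.assoc)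
  also have "rel_cong n \<dots> (P1 * (sc c2 * (Y * P2)))"
    using assms(2) unfolding qcommutes_def by (rule rel_cong_mult_left)
  also have "\<dots> = sc c2 * ((P1 * Y) * P2)" by (simp add: sc_normalize mult.assoc)
  also have "rel_cong n \<dots> (sc c2 * ((sc c1 * (Y * P1)) * P2))"
    using assms(1) unfolding qcommutes_def by (intro rel_cong_mult_left rel_cong_mult_right)
  also have "\<dots> = sc (c1 * c2) * (Y * (P1 * P2))" by (simp add: sc_normalize mult.assoc mult.commute)
  finally show ?thesis unfolding qcommutes_def .
qed

lemma qcommutes_mult_right:
  assumes "qcommutes n P Y1 c1" "qcommutes n P Y2 c2"
  shows "qcommutes n P (Y1 * Y2) (c1 * c2)"
proof -
  have "P * (Y1 * Y2) = (P * Y1) * Y2" by (simp add: mult.assoc)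
  also have "rel_cong n \<dots> (sc c1 * (Y1 * P) * Y2)"
    using assms(1) unfolding qcommutes_def by (rule rel_cong_mult_right)
  also have "\<dots> = sc c1 * (Y1 * (P * Y2))" by (simp add: sc_normalize mult.assoc)
  also have "rel_cong n \<dots> (sc c1 * (Y1 * (sc c2 * (Y2 * P))))"
    using assms(2) unfolding qcommutes_def by (intro rel_cong_mult_left)
  also have "\<dots> = sc (c1 * c2) * ((Y1 * Y2) * P)" by (simp add: sc_normalize mult.assoc)
  finally show ?thesis unfolding qcommutes_def .
qed

lemma qcommutes_swap: "qcommutes n P Y c \<Longrightarrow> c \<noteq> 0 \<Longrightarrow> qcommutes n Y P (inverse c)"
  unfolding qcommutes_def
proof -
  assume h: "rel_cong n (P * Y) (sc c * (Y * P))" and "c \<noteq> 0"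
  have "rel_cong n (sc (inverse c) * (P * Y)) (sc (inverse c) * (sc c * (Y * P)))"
    by (rule rel_cong_mult_left[OF h])
  with \<open>c \<noteq> 0\<close> have "rel_cong n (sc (inverse c) * (P * Y)) (Y * P)"
    by (simp add: sc_normalize)
  then show "rel_cong n (Y * P) (sc (inverse c) * (P * Y))" by (rule rel_cong_sym)
qed

lemma qcommutes_inverse_left:
  assumes h: "qcommutes n P Y c" and "c \<noteq> 0"
    and inv1: "rel_cong n (P * P') 1" and inv2: "rel_cong n (P' * P) 1"
  shows "qcommutes n P' Y (inverse c)"
proof -
  have swap: "qcommutes n Y P (inverse c)" by (rule qcommutes_swap[OF h \<open>c \<noteq> 0\<close>])
  have "P' * Y = P' * Y * 1" by simp
  also have "rel_cong n \<dots> (P' * Y * (P * P'))" by (intro rel_cong_mult_left rel_cong_sym[OF inv1])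
  also have "\<dots> = P' * (Y * P) * P'" by (simp add: mult.assoc)
  also have "rel_cong n \<dots> (P' * (sc (inverse c) * (P * Y)) * P')"
    using swap unfolding qcommutes_def by (intro rel_cong_mult_left rel_cong_mult_right)
  also have "\<dots> = sc (inverse c) * ((P' * P) * (Y * P'))" by (simp add: sc_normalize mult.assoc)
  also have "rel_cong n \<dots> (sc (inverse c) * (1 * (Y * P')))"
    by (intro rel_cong_mult_left rel_cong_mult_right inv2)
  finally show ?thesis unfolding qcommutes_def by simp
qed

lemma qcommutes_diff:
  "qcommutes n P Y1 c \<Longrightarrow> qcommutes n P Y2 c \<Longrightarrow> qcommutes n P (Y1 - Y2) c"
  unfolding qcommutes_def by (drule (1) rel_cong_diff) (simp add: algebra_simps)

lemma qcommutes_smult: "qcommutes n P Y c \<Longrightarrow> qcommutes n P (sc a * Y) c"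
  unfolding qcommutes_def
  by (drule rel_cong_mult_left[of _ _ _ "sc a"]) (simp add: sc_normalize mult.assoc mult.commute)

lemma qcommutes_power:
  assumes "qcommutes n P Y c"
  shows "qcommutes n P (Y ^ k) (c ^ k)"
proof (induct k)
  case 0 then show ?case by (simp add: qcommutes_def)
next
  case (Suc k)
  from qcommutes_mult_right[OF Suc assms] show ?case by (simp only: power_Suc2)
qed

lemma qcommutes_power_left:
  assumes "qcommutes n P Y c"
  shows "qcommutes n (P ^ k) Y (c ^ k)"
proof (induct k)
  case 0 then show ?case by (simp add: qcommutes_def)
next
  case (Suc k)
  from qcommutes_mult_left[OF assms Suc] show ?case by (simp only: power_Suc)
qed

lemma rel_cong_power_mult_inverse:
  assumes inv: "rel_cong n (P * P') 1" and comm: "qcommutes n P P' 1"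
  shows "rel_cong n (P ^ k * P' ^ k) 1"
proof (induct k)
  case 0 then show ?case by simp
next
  case (Suc k)
  have "P ^ Suc k * P' ^ Suc k = P * ((P ^ k * P') * P' ^ k)" by (simp add: mult.assoc power_Suc2)
  also have "rel_cong n \<dots> (P * ((sc 1 * (P' * P ^ k)) * P' ^ k))"
    using qcommutes_power_left[OF comm, of k] unfolding qcommutes_def
    by (intro rel_cong_mult_left rel_cong_mult_right) simp
  also have "\<dots> = (P * P') * (P ^ k * P' ^ k)" by (simp add: mult.assoc)
  also have "rel_cong n \<dots> (1 * 1)" by (intro rel_cong_mult inv Suc)
  finally show ?case by simp
qed

lemma power_mult_qcommutes:
  assumes "qcommutes n P Q c"
  shows "rel_cong n ((Q * P) ^ m) (sc (c ^ (\<Sum>k<m. k)) * (Q ^ m * P ^ m))"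
proof (induct m)
  case 0 then show ?case by simp
next
  case (Suc m)
  let ?s = "\<Sum>k<m. k"
  have "(Q * P) ^ Suc m = (Q * P) ^ m * (Q * P)" by (simp only: power_Suc2)
  also have "rel_cong n \<dots> (sc (c ^ ?s) * (Q ^ m * P ^ m) * (Q * P))"
    by (intro rel_cong_mult_right Suc)
  also have "\<dots> = sc (c ^ ?s) * (Q ^ m * (P ^ m * Q) * P)" by (simp add: mult.assoc)
  also have "rel_cong n \<dots> (sc (c ^ ?s) * (Q ^ m * (sc (c ^ m) * (Q * P ^ m)) * P))"
    using qcommutes_power_left[OF assms, of m] unfolding qcommutes_def
    by (intro rel_cong_mult_left rel_cong_mult_right)
  also have "\<dots> = sc (c ^ (?s + m)) * ((Q ^ m * Q) * (P ^ m * P))"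
    by (simp add: sc_normalize mult.assoc power_add)
  also have "\<dots> = sc (c ^ (\<Sum>k<Suc m. k)) * (Q ^ Suc m * P ^ Suc m)"
    by (simp only: power_Suc2 sum.lessThan_Suc)
  finally show ?case .
qed

definition dpow :: "alg \<Rightarrow> nat \<Rightarrow> alg" where
  "dpow Y m = sc (1 / qfact m) * Y ^ m"

lemma dpow_0 [simp]: "dpow Y 0 = 1"
  by (simp add: dpow_def)

lemma dpow_1 [simp]: "dpow Y (Suc 0) = Y"
  by (simp add: dpow_def qfact_def)

lemma mult_dpow: "Y * dpow Y m = sc (qint (Suc m)) * dpow Y (Suc m)"
proof -
  have "sc (qint (Suc m)) * dpow Y (Suc m) = sc (qint (Suc m) / qfact (Suc m)) * (Y * Y ^ m)"
    by (simp add: dpow_def sc_mult_assoc)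
  then show ?thesis by (simp add: qint_div_qfact_Suc dpow_def sc_normalize)
qed

lemma dpow_Suc: "dpow Y (Suc m) = sc (1 / qint (Suc m)) * (Y * dpow Y m)"
  using qint_neq_0[of "Suc m"] by (simp add: mult_dpow sc_normalize)

lemma dpow_smult: "dpow (sc c * Y) m = sc (c ^ m) * dpow Y m"
proof -
  have "(sc c * Y) ^ m = sc (c ^ m) * Y ^ m"
    by (induct m) (simp_all add: sc_normalize mult.assoc)
  then show ?thesis by (simp add: dpow_def sc_normalize mult.commute)
qed

lemma dpow_uminus: "dpow (- Y) m = sc ((-1) ^ m) * dpow Y m"
  using dpow_smult[of "-1" Y m] by (simp add: sc_uminus)

lemma Tfree_dpow: "Tfree i (dpow Y m) = dpow (Tfree i Y) m"
  by (simp add: dpow_def Tfree_mult Tfree_sc Tfree_power)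

lemma qcommutes_dpow: "qcommutes n P Y c \<Longrightarrow> qcommutes n P (dpow Y k) (c ^ k)"
  unfolding dpow_def by (intro qcommutes_smult qcommutes_power)

lemma dpow_mult_qcommutes_right:
  assumes "qcommutes n P Q c"
  shows "rel_cong n (dpow (Q * P) m) (sc (c ^ (\<Sum>k<m. k)) * (dpow Q m * P ^ m))"
proof -
  have "dpow (Q * P) m = sc (1 / qfact m) * (Q * P) ^ m" by (simp add: dpow_def)
  also have "rel_cong n \<dots> (sc (1 / qfact m) * (sc (c ^ (\<Sum>k<m. k)) * (Q ^ m * P ^ m)))"
    by (intro rel_cong_mult_left power_mult_qcommutes assms)
  also have "\<dots> = sc (c ^ (\<Sum>k<m. k)) * (dpow Q m * P ^ m)"
    by (simp add: dpow_def sc_normalize mult.assoc mult.commute)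
  finally show ?thesis .
qed

lemma dpow_mult_qcommutes_left:
  assumes "qcommutes n P Q c"
  shows "rel_cong n (dpow (Q * P) m) (sc (c ^ (\<Sum>k<m. k)) * (Q ^ m * dpow P m))"
proof -
  have "dpow (Q * P) m = sc (1 / qfact m) * (Q * P) ^ m" by (simp add: dpow_def)
  also have "rel_cong n \<dots> (sc (1 / qfact m) * (sc (c ^ (\<Sum>k<m. k)) * (Q ^ m * P ^ m)))"
    by (intro rel_cong_mult_left power_mult_qcommutes assms)
  also have "\<dots> = sc (c ^ (\<Sum>k<m. k)) * (Q ^ m * dpow P m)"
    by (simp add: dpow_def sc_normalize mult.assoc mult.commute)
  finally show ?thesis .
qed

definition zclosed :: "nat \<Rightarrow> alg set \<Rightarrow> bool" where
  "zclosed n C \<longleftrightarrow> 1 \<in> C \<and> (\<forall>x\<in>C. \<forall>y\<in>C. x + y \<in> C \<and> x * y \<in> C)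
     \<and> (\<forall>c\<in>Zset. \<forall>x\<in>C. sc c * x \<in> C) \<and> (\<forall>x\<in>C. \<forall>y. rel_cong n x y \<longrightarrow> y \<in> C)"

lemma zclosed_one: "zclosed n C \<Longrightarrow> 1 \<in> C" by (simp add: zclosed_def)
lemma zclosed_add: "zclosed n C \<Longrightarrow> x \<in> C \<Longrightarrow> y \<in> C \<Longrightarrow> x + y \<in> C" by (simp add: zclosed_def)
lemma zclosed_mult: "zclosed n C \<Longrightarrow> x \<in> C \<Longrightarrow> y \<in> C \<Longrightarrow> x * y \<in> C" by (simp add: zclosed_def)
lemma zclosed_smult: "zclosed n C \<Longrightarrow> c \<in> Zset \<Longrightarrow> x \<in> C \<Longrightarrow> sc c * x \<in> C" by (simp add: zclosed_def)
lemma zclosed_cong: "zclosed n C \<Longrightarrow> x \<in> C \<Longrightarrow> rel_cong n x y \<Longrightarrow> y \<in> C" by (simp add: zclosed_def)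

lemma zclosed_zero: "zclosed n C \<Longrightarrow> 0 \<in> C"
  using zclosed_smult[OF _ Zset_0 zclosed_one] by simp

lemma zclosed_uminus: "zclosed n C \<Longrightarrow> x \<in> C \<Longrightarrow> - x \<in> C"
  using zclosed_smult[OF _ Zset_minus_1] by (simp add: sc_uminus)

lemma zclosed_diff: "zclosed n C \<Longrightarrow> x \<in> C \<Longrightarrow> y \<in> C \<Longrightarrow> x - y \<in> C"
  using zclosed_add[OF _ _ zclosed_uminus] by (simp only: diff_conv_add_uminus)

lemma zclosed_sum: "zclosed n C \<Longrightarrow> (\<And>k. k \<in> A \<Longrightarrow> f k \<in> C) \<Longrightarrow> sum f A \<in> C"
  by (induct A rule: infinite_finite_induct) (auto intro: zclosed_add zclosed_zero)

lemma zclosed_power: "zclosed n C \<Longrightarrow> x \<in> C \<Longrightarrow> x ^ k \<in> C"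
  by (induct k) (auto intro: zclosed_mult zclosed_one)

lemma zclosed_vparam_power: "zclosed n C \<Longrightarrow> q \<in> vparam \<Longrightarrow> x \<in> C \<Longrightarrow> sc (q ^ k) * x \<in> C"
  by (rule zclosed_smult) (auto intro: Zset_vparam_power)

lemma zclosed_vv_diff_inverse: "zclosed n C \<Longrightarrow> x \<in> C \<Longrightarrow> sc (vv - inverse vv) * x \<in> C"
  by (simp add: sc_diff left_diff_distrib zclosed_diff zclosed_smult Zset_vv Zset_inverse_vv)

lemma zclosed_dpow_uminus_iff: "zclosed n C \<Longrightarrow> dpow (- Y) m \<in> C \<longleftrightarrow> dpow Y m \<in> C"
proof -
  assume C: "zclosed n C"
  have "sc ((-1) ^ m) * dpow (- Y) m = dpow Y m"
    by (simp add: dpow_uminus sc_mult_assoc power_mult_distrib[symmetric])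
  then show ?thesis
    using zclosed_smult[OF C Zset_minus_1_power, of "dpow (- Y) m" m]
      zclosed_smult[OF C Zset_minus_1_power, of "dpow Y m" m]
    by (auto simp: dpow_uminus)
qed

section \<open>Divided powers of a \<open>q\<close>-commutator\<close>

lemma commutator_expansion_coeff:
  assumes q: "q \<in> vparam" and k: "k \<le> Suc a" and ab: "Suc a \<le> b"
  shows "(inverse q ^ ((a - k) * (b - k)) * (inverse q ^ (b - k) * q ^ k * qint (Suc a - k))
          + (if k = 0 then 0 else inverse q ^ ((a - (k - 1)) * (b - (k - 1))) * qint k))
          / qint (Suc a)
        = inverse q ^ ((Suc a - k) * (b - k))"
proof (cases k)
  case 0
  have "inverse q ^ (a * b) * (inverse q ^ b * qint (Suc a)) / qint (Suc a)
      = inverse q ^ (a * b) * inverse q ^ b"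
    using qint_neq_0[of "Suc a"] by simp
  also have "\<dots> = inverse q ^ (Suc a * b)" by (simp add: power_add[symmetric] add.commute)
  finally show ?thesis using 0 by simp
next
  case (Suc j)
  define m where "m = a - j"
  define b' where "b' = b - Suc j"
  have jm: "m + Suc j = Suc a" using k Suc by (simp add: m_def)
  have e1: "a - k = m - 1" using Suc by (simp add: m_def)
  have e2: "b - k = b'" using Suc by (simp add: b'_def)
  have e3: "Suc a - k = m" using Suc k by (simp add: m_def)
  have e4: "a - (k - 1) = m" using Suc by (simp add: m_def)
  have e5: "b - (k - 1) = Suc b'" using Suc ab k by (simp add: b'_def)
  have cA: "inverse q ^ ((m - 1) * b') * inverse q ^ b' * qint m = inverse q ^ (m * b') * qint m"
    by (cases m) (simp_all add: power_add[symmetric] add.commute)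
  have cB: "inverse q ^ (m * Suc b') = inverse q ^ (m * b') * inverse q ^ m"
    by (simp add: power_add[symmetric] add.commute)
  have "inverse q ^ ((a - k) * (b - k)) * (inverse q ^ (b - k) * q ^ k * qint (Suc a - k))
          + inverse q ^ ((a - (k - 1)) * (b - (k - 1))) * qint k
      = (inverse q ^ ((m - 1) * b') * inverse q ^ b' * qint m) * q ^ k
          + inverse q ^ (m * Suc b') * qint k"
    unfolding e1 e2 e3 e4 e5 by (simp add: algebra_simps)
  also have "\<dots> = inverse q ^ (m * b') * (q ^ k * qint m + inverse q ^ m * qint k)"
    unfolding cA cB by (simp add: algebra_simps)
  also have "q ^ k * qint m + inverse q ^ m * qint k = qint (Suc a)"
    using qint_add[OF q, of k m] jm Suc by simp
  finally show ?thesis using Suc qint_neq_0[of "Suc a"] e3 e2 by simp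
qed

context
  fixes n :: nat and q :: qv and A B W :: alg
  assumes q: "q \<in> vparam"
    and AB: "rel_cong n (A * B) (sc (inverse q) * (B * A) + W)"
    and AW: "qcommutes n A W q"
    and WB: "qcommutes n W B q"
begin

lemma A_mult_power_B:
  "rel_cong n (A * B ^ Suc b)
     (sc (inverse q ^ Suc b) * (B ^ Suc b * A) + sc (qint (Suc b)) * (B ^ b * W))"
proof (induct b)
  case 0 then show ?case using AB by simp
next
  case (Suc b)
  let ?qi = "inverse q"
  have "A * B ^ Suc (Suc b) = (A * B ^ Suc b) * B" by (simp only: power_Suc2 mult.assoc)
  also have "rel_cong n \<dots> ((sc (?qi ^ Suc b) * (B ^ Suc b * A) + sc (qint (Suc b)) * (B ^ b * W)) * B)"
    by (rule rel_cong_mult_right[OF Suc])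
  also have "\<dots> = sc (?qi ^ Suc b) * (B ^ Suc b * (A * B)) + sc (qint (Suc b)) * (B ^ b * (W * B))"
    by (simp add: algebra_simps)
  also have "rel_cong n \<dots> (sc (?qi ^ Suc b) * (B ^ Suc b * (sc ?qi * (B * A) + W))
                           + sc (qint (Suc b)) * (B ^ b * (sc q * (B * W))))"
    using WB unfolding qcommutes_def by (intro rel_cong_add rel_cong_mult_left AB)
  also have "\<dots> = sc (?qi ^ Suc (Suc b)) * (B ^ Suc (Suc b) * A)
                 + (sc (?qi ^ Suc b) + sc (q * qint (Suc b))) * (B ^ Suc b * W)"
    by (simp add: algebra_simps sc_normalize power_Suc2 mult.commute)
       (simp add: mult.assoc[symmetric] power_commutes)
  also have "sc (?qi ^ Suc b) + sc (q * qint (Suc b)) = sc (qint (Suc (Suc b)))"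
    using qint_add[OF q, of 1 "Suc b"] by (simp add: sc_add[symmetric] add.commute)
  finally show ?case .
qed

lemma A_mult_dpow_B:
  "rel_cong n (A * dpow B (Suc b)) (sc (inverse q ^ Suc b) * (dpow B (Suc b) * A) + dpow B b * W)"
proof -
  have "A * dpow B (Suc b) = sc (1 / qfact (Suc b)) * (A * B ^ Suc b)"
    by (simp add: dpow_def sc_normalize)
  also have "rel_cong n \<dots> (sc (1 / qfact (Suc b)) * (sc (inverse q ^ Suc b) * (B ^ Suc b * A)
                                                   + sc (qint (Suc b)) * (B ^ b * W)))"
    by (intro rel_cong_mult_left A_mult_power_B)
  also have "\<dots> = sc (inverse q ^ Suc b) * (dpow B (Suc b) * A)
                 + sc (qint (Suc b) / qfact (Suc b)) * (B ^ b * W)"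
    by (simp add: dpow_def algebra_simps sc_normalize mult.commute)
  also have "qint (Suc b) / qfact (Suc b) = 1 / qfact b" by (rule qint_div_qfact_Suc)
  finally show ?thesis by (simp add: dpow_def sc_normalize mult.assoc)
qed

definition commutator_term :: "nat \<Rightarrow> nat \<Rightarrow> nat \<Rightarrow> alg" where
  "commutator_term a b k = dpow B (b - k) * (dpow W k * dpow A (a - k))"

lemma A_mult_commutator_term:
  assumes "k \<le> a" and "a < b"
  shows "rel_cong n (A * commutator_term a b k)
     (sc (inverse q ^ (b - k) * q ^ k * qint (Suc a - k)) * commutator_term (Suc a) b k
      + sc (qint (Suc k)) * commutator_term (Suc a) b (Suc k))"
proof -
  obtain r where r: "b - k = Suc r" using assms by (metis Suc_diff_Suc le_less_trans)
  have r': "b - Suc k = r" using r by simp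
  have a1: "Suc (a - k) = Suc a - k" using assms by simp
  let ?R = "dpow W k * dpow A (a - k)"
  have "A * commutator_term a b k = (A * dpow B (Suc r)) * ?R"
    by (simp add: commutator_term_def r mult.assoc)
  also have "rel_cong n \<dots> ((sc (inverse q ^ Suc r) * (dpow B (Suc r) * A) + dpow B r * W) * ?R)"
    by (intro rel_cong_mult_right A_mult_dpow_B)
  also have "\<dots> = sc (inverse q ^ Suc r) * (dpow B (Suc r) * ((A * dpow W k) * dpow A (a - k)))
                 + dpow B r * ((W * dpow W k) * dpow A (a - k))"
    by (simp add: algebra_simps)
  also have "rel_cong n \<dots> (sc (inverse q ^ Suc r) * (dpow B (Suc r) * ((sc (q ^ k) * (dpow W k * A))
                              * dpow A (a - k))) + dpow B r * ((W * dpow W k) * dpow A (a - k)))"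
    using qcommutes_dpow[OF AW, of k] unfolding qcommutes_def
    by (intro rel_cong_add rel_cong_mult_left rel_cong_mult_right rel_cong_refl)
  also have "\<dots> = sc (inverse q ^ Suc r * q ^ k * qint (Suc (a - k)))
                   * (dpow B (Suc r) * (dpow W k * dpow A (Suc (a - k))))
                 + sc (qint (Suc k)) * (dpow B r * (dpow W (Suc k) * dpow A (a - k)))"
    by (simp add: mult_dpow sc_normalize mult.assoc)
  also have "\<dots> = sc (inverse q ^ (b - k) * q ^ k * qint (Suc a - k)) * commutator_term (Suc a) b k
                 + sc (qint (Suc k)) * commutator_term (Suc a) b (Suc k)"
    unfolding commutator_term_def r r' a1 by simp
  finally show ?thesis .
qed

lemma dpow_A_mult_dpow_B:
  "a \<le> b \<Longrightarrow> rel_cong n (dpow A a * dpow B b)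
     (\<Sum>k\<le>a. sc (inverse q ^ ((a - k) * (b - k))) * commutator_term a b k)"
proof (induct a)
  case 0 then show ?case by (simp add: commutator_term_def)
next
  case (Suc a)
  have ab: "a < b" using Suc(2) by simp
  define c where "c k = inverse q ^ ((a - k) * (b - k))" for k
  define \<alpha> where "\<alpha> k = inverse q ^ (b - k) * q ^ k * qint (Suc a - k)" for k
  define \<beta> where "\<beta> k = (if k = 0 then 0 else c (k - 1) * qint k)" for k
  let ?M = "commutator_term (Suc a) b"
  have "dpow A (Suc a) * dpow B b = sc (1 / qint (Suc a)) * (A * (dpow A a * dpow B b))"
    by (simp add: dpow_Suc mult.assoc sc_normalize)
  also have "rel_cong n \<dots> (sc (1 / qint (Suc a)) * (A * (\<Sum>k\<le>a. sc (c k) * commutator_term a b k)))"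
    unfolding c_def using Suc ab by (intro rel_cong_mult_left) simp
  also have "\<dots> = sc (1 / qint (Suc a)) * (\<Sum>k\<le>a. sc (c k) * (A * commutator_term a b k))"
    by (simp add: sum_distrib_left sc_normalize)
  also have "rel_cong n \<dots> (sc (1 / qint (Suc a))
      * (\<Sum>k\<le>a. sc (c k) * (sc (\<alpha> k) * ?M k + sc (qint (Suc k)) * ?M (Suc k))))"
    unfolding \<alpha>_def using ab
    by (intro rel_cong_mult_left rel_cong_sum A_mult_commutator_term) simp_all
  also have "(\<Sum>k\<le>a. sc (c k) * (sc (\<alpha> k) * ?M k + sc (qint (Suc k)) * ?M (Suc k)))
      = (\<Sum>k\<le>a. sc (c k * \<alpha> k) * ?M k) + (\<Sum>k\<le>a. sc (c k * qint (Suc k)) * ?M (Suc k))"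
    by (simp add: algebra_simps sc_normalize sum.distrib)
  also have "(\<Sum>k\<le>a. sc (c k * \<alpha> k) * ?M k) = (\<Sum>k\<le>Suc a. sc (c k * \<alpha> k) * ?M k)"
    by (simp add: \<alpha>_def)
  also have "(\<Sum>k\<le>a. sc (c k * qint (Suc k)) * ?M (Suc k)) = (\<Sum>k\<le>Suc a. sc (\<beta> k) * ?M k)"
    by (subst sum.atMost_Suc_shift) (simp add: \<beta>_def)
  also have "(\<Sum>k\<le>Suc a. sc (c k * \<alpha> k) * ?M k) + (\<Sum>k\<le>Suc a. sc (\<beta> k) * ?M k)
      = (\<Sum>k\<le>Suc a. sc (c k * \<alpha> k + \<beta> k) * ?M k)"
    by (simp add: sum.distrib[symmetric] sc_add distrib_right)
  also have "sc (1 / qint (Suc a)) * \<dots>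
      = (\<Sum>k\<le>Suc a. sc ((c k * \<alpha> k + \<beta> k) / qint (Suc a)) * ?M k)"
    by (subst sum_distrib_left, rule sum.cong[OF refl], simp add: sc_mult_assoc)
  also have "\<dots> = (\<Sum>k\<le>Suc a. sc (inverse q ^ ((Suc a - k) * (b - k))) * ?M k)"
  proof (rule sum.cong[OF refl])
    fix k assume "k \<in> {..Suc a}"
    then have "(c k * \<alpha> k + \<beta> k) / qint (Suc a) = inverse q ^ ((Suc a - k) * (b - k))"
      unfolding c_def \<alpha>_def \<beta>_def by (intro commutator_expansion_coeff[OF q _ Suc(2)]) simp
    then show "sc ((c k * \<alpha> k + \<beta> k) / qint (Suc a)) * ?M k
             = sc (inverse q ^ ((Suc a - k) * (b - k))) * ?M k" by simp
  qed
  finally show ?case .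
qed

text \<open>In the expansion of \<open>A^(m) B^(m)\<close> the top term is \<open>W^(m)\<close>; all other terms involve
  lower divided powers of \<open>W\<close>.\<close>
lemma dpow_commutator_closed:
  assumes C: "zclosed n C" and A: "\<And>a. dpow A a \<in> C" and B: "\<And>b. dpow B b \<in> C"
  shows "dpow W m \<in> C"
proof (induct m rule: less_induct)
  case (less m)
  let ?t = "\<lambda>k. sc (inverse q ^ ((m - k) * (m - k))) * commutator_term m m k"
  have "rel_cong n (dpow A m * dpow B m) (\<Sum>k\<le>m. ?t k)"
    using dpow_A_mult_dpow_B[of m m] by simp
  also have "(\<Sum>k\<le>m. ?t k) = (\<Sum>k<m. ?t k) + dpow W m"
    by (simp add: lessThan_Suc_atMost[symmetric] commutator_term_def)
  finally have "rel_cong n (dpow A m * dpow B m - (\<Sum>k<m. ?t k)) (dpow W m)"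
    unfolding rel_cong_def by (simp add: algebra_simps)
  moreover have "dpow A m * dpow B m - (\<Sum>k<m. ?t k) \<in> C"
    using C A B less vparam_inverse[OF q] unfolding commutator_term_def
    by (intro zclosed_diff zclosed_mult zclosed_sum zclosed_vparam_power) auto
  ultimately show ?case using zclosed_cong[OF C] by blast
qed

end

lemma serre_qcommutes_left:
  assumes "q \<noteq> 0"
    and "rel_cong n (A ^ 2 * B - sc (q + inverse q) * A * B * A + B * A ^ 2) 0"
  shows "qcommutes n A (A * B - sc (inverse q) * (B * A)) q"
  unfolding qcommutes_def
  using assms(1)
  by (intro rel_cong_by_diff[OF assms(2)]) (simp add: algebra_simps sc_normalize power2_eq_square)

lemma serre_qcommutes_right:
  assumes "q \<noteq> 0"
    and "rel_cong n (B ^ 2 * A - sc (q + inverse q) * B * A * B + A * B ^ 2) 0"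
  shows "qcommutes n (A * B - sc (inverse q) * (B * A)) B q"
  unfolding qcommutes_def
  using assms(1)
  by (intro rel_cong_by_diff[OF assms(2)]) (simp add: algebra_simps sc_normalize power2_eq_square)

lemma dpow_serre_commutator_closed:
  assumes q: "q \<in> vparam"
    and "rel_cong n (A ^ 2 * B - sc (q + inverse q) * A * B * A + B * A ^ 2) 0"
    and "rel_cong n (B ^ 2 * A - sc (q + inverse q) * B * A * B + A * B ^ 2) 0"
    and "zclosed n C" and "\<And>a. dpow A a \<in> C" and "\<And>b. dpow B b \<in> C"
  shows "dpow (A * B - sc (inverse q) * (B * A)) m \<in> C"
  using vparam_neq_0[OF q] assms
  by (intro dpow_commutator_closed[OF q _ serre_qcommutes_left serre_qcommutes_right]) simp_all

section \<open>Reduction to the generators of the integral form\<close>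

lemma zsubalg_subset:
  assumes "1 \<in> C" and "S \<subseteq> C"
    and "\<And>c x. c \<in> Zset \<Longrightarrow> x \<in> C \<Longrightarrow> sc c * x \<in> C"
    and "\<And>x y. x \<in> C \<Longrightarrow> y \<in> C \<Longrightarrow> x + y \<in> C"
    and "\<And>x y. x \<in> C \<Longrightarrow> y \<in> C \<Longrightarrow> x * y \<in> C"
  shows "zsubalg S \<subseteq> C"
proof
  fix x assume "x \<in> zsubalg S"
  then show "x \<in> C" by induct (use assms in auto)
qed

lemma UZ_gen: "s \<in> UZ_gens n \<Longrightarrow> s \<in> UZ n"
  unfolding UZ_def by (rule zsubalg.gen)

lemma UZ_one: "1 \<in> UZ n"
  unfolding UZ_def by (rule zsubalg.one)

lemma UZ_smult: "c \<in> Zset \<Longrightarrow> a \<in> UZ n \<Longrightarrow> sc c * a \<in> UZ n"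
  unfolding UZ_def by (rule zsubalg.smult)

lemma UZ_add: "a \<in> UZ n \<Longrightarrow> b \<in> UZ n \<Longrightarrow> a + b \<in> UZ n"
  unfolding UZ_def by (rule zsubalg.add)

lemma UZ_mult: "a \<in> UZ n \<Longrightarrow> b \<in> UZ n \<Longrightarrow> a * b \<in> UZ n"
  unfolding UZ_def by (rule zsubalg.mult)

lemma UZ_subset_zclosed: "zclosed n C \<Longrightarrow> UZ_gens n \<subseteq> C \<Longrightarrow> UZ n \<subseteq> C"
  unfolding UZ_def
  by (rule zsubalg_subset) (auto intro: zclosed_one zclosed_smult zclosed_add zclosed_mult)

lemma UZ_power: "a \<in> UZ n \<Longrightarrow> a ^ k \<in> UZ n"
  by (induct k) (simp_all add: UZ_one UZ_mult)

lemma UZ_K: "k \<in> {1..n} \<Longrightarrow> Kg k \<in> UZ n" by (intro UZ_gen) (auto simp: UZ_gens_def)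
lemma UZ_Kinv: "k \<in> {1..n} \<Longrightarrow> Kig k \<in> UZ n" by (intro UZ_gen) (auto simp: UZ_gens_def)
lemma UZ_Kbar: "k \<in> {1..n} \<Longrightarrow> Kbg k \<in> UZ n" by (intro UZ_gen) (auto simp: UZ_gens_def)
lemma UZ_qbinK: "k \<in> {1..n} \<Longrightarrow> qbinK k t \<in> UZ n" by (intro UZ_gen) (auto simp: UZ_gens_def)
lemma UZ_Ebar: "j \<in> {1..<n} \<Longrightarrow> Ebg j \<in> UZ n" by (intro UZ_gen) (auto simp: UZ_gens_def)
lemma UZ_Fbar: "j \<in> {1..<n} \<Longrightarrow> Fbg j \<in> UZ n" by (intro UZ_gen) (auto simp: UZ_gens_def)
lemma UZ_dpow_E: "j \<in> {1..<n} \<Longrightarrow> dpow (Eg j) m \<in> UZ n"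
  unfolding dpow_def by (intro UZ_gen) (auto simp: UZ_gens_def)
lemma UZ_dpow_F: "j \<in> {1..<n} \<Longrightarrow> dpow (Fg j) m \<in> UZ n"
  unfolding dpow_def by (intro UZ_gen) (auto simp: UZ_gens_def)
lemma UZ_E: "j \<in> {1..<n} \<Longrightarrow> Eg j \<in> UZ n" using UZ_dpow_E[of j n 1] by simp
lemma UZ_F: "j \<in> {1..<n} \<Longrightarrow> Fg j \<in> UZ n" using UZ_dpow_F[of j n 1] by simp

lemma UZ_gens_cases:
  assumes "s \<in> UZ_gens n"
  obtains (K) k where "k \<in> {1..n}" "s = Kg k"
    | (Kinv) k where "k \<in> {1..n}" "s = Kig k"
    | (Kbar) k where "k \<in> {1..n}" "s = Kbg k"
    | (qbinK) k t where "k \<in> {1..n}" "s = qbinK k t"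
    | (Ebar) j where "j \<in> {1..<n}" "s = Ebg j"
    | (Fbar) j where "j \<in> {1..<n}" "s = Fbg j"
    | (E) j m where "j \<in> {1..<n}" "s = dpow (Eg j) m"
    | (F) j m where "j \<in> {1..<n}" "s = dpow (Fg j) m"
  using assms unfolding UZ_gens_def dpow_def by blast

definition UZ_mod :: "nat \<Rightarrow> alg set" where
  "UZ_mod n = {x + y | x y. x \<in> UZ n \<and> y \<in> rel_ideal n}"

definition TUZ_mod :: "nat \<Rightarrow> nat \<Rightarrow> alg set" where
  "TUZ_mod n i = {u. \<exists>x\<in>UZ n. rel_cong n (Tfree i x) u}"

lemma UZ_in_UZ_mod: "x \<in> UZ n \<Longrightarrow> x \<in> UZ_mod n"
  unfolding UZ_mod_def by (rule CollectI, rule exI[of _ x], rule exI[of _ 0]) (simp add: rel_ideal.zero)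

lemma Tfree_in_TUZ_mod: "x \<in> UZ n \<Longrightarrow> Tfree i x \<in> TUZ_mod n i"
  unfolding TUZ_mod_def using rel_cong_refl by blast

lemma zclosed_UZ_mod: "zclosed n (UZ_mod n)"
  unfolding zclosed_def
proof (intro conjI ballI allI impI)
  show "1 \<in> UZ_mod n" by (rule UZ_in_UZ_mod[OF UZ_one])
next
  fix x y assume "x \<in> UZ_mod n" "y \<in> UZ_mod n"
  then obtain x1 y1 x2 y2 where h: "x = x1 + y1" "y = x2 + y2" "x1 \<in> UZ n" "x2 \<in> UZ n"
    "y1 \<in> rel_ideal n" "y2 \<in> rel_ideal n" unfolding UZ_mod_def by blast
  have "x + y = (x1 + x2) + (y1 + y2)" using h by (simp add: algebra_simps)
  then show "x + y \<in> UZ_mod n"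
    unfolding UZ_mod_def using h by (blast intro: UZ_add rel_ideal.add)
  have "x * y = (x1 * x2) + (x1 * y2 + y1 * x2 + y1 * y2)" using h by (simp add: algebra_simps)
  then show "x * y \<in> UZ_mod n" unfolding UZ_mod_def using h
    by (blast intro: UZ_mult rel_ideal.add rel_ideal_mult_left rel_ideal_mult_right)
next
  fix c x assume c: "c \<in> Zset" and "x \<in> UZ_mod n"
  then obtain x1 y1 where h: "x = x1 + y1" "x1 \<in> UZ n" "y1 \<in> rel_ideal n"
    unfolding UZ_mod_def by blast
  have "sc c * x = sc c * x1 + sc c * y1" using h by (simp add: algebra_simps)
  then show "sc c * x \<in> UZ_mod n"
    unfolding UZ_mod_def using h c by (blast intro: UZ_smult rel_ideal_mult_left)
next
  fix x y assume "x \<in> UZ_mod n" and xy: "rel_cong n x y"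
  then obtain x1 y1 where h: "x = x1 + y1" "x1 \<in> UZ n" "y1 \<in> rel_ideal n"
    unfolding UZ_mod_def by blast
  have "y = x1 + (y1 - (x - y))" using h by simp
  moreover have "y1 - (x - y) \<in> rel_ideal n"
    using h xy unfolding rel_cong_def by (blast intro: rel_ideal_diff)
  ultimately show "y \<in> UZ_mod n" unfolding UZ_mod_def using h by blast
qed

lemma zclosed_TUZ_mod: "zclosed n (TUZ_mod n i)"
  unfolding zclosed_def
proof (intro conjI ballI allI impI)
  show "1 \<in> TUZ_mod n i"
    using Tfree_in_TUZ_mod[OF UZ_one] by (simp only: Tfree_1)
next
  fix x y assume "x \<in> TUZ_mod n i" "y \<in> TUZ_mod n i"
  then obtain a b where h: "a \<in> UZ n" "b \<in> UZ n" "rel_cong n (Tfree i a) x" "rel_cong n (Tfree i b) y"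
    unfolding TUZ_mod_def by blast
  have "rel_cong n (Tfree i (a + b)) (x + y)" using h by (simp add: Tfree_add rel_cong_add)
  then show "x + y \<in> TUZ_mod n i" unfolding TUZ_mod_def using h UZ_add by blast
  have "rel_cong n (Tfree i (a * b)) (x * y)" using h by (simp add: Tfree_mult rel_cong_mult)
  then show "x * y \<in> TUZ_mod n i" unfolding TUZ_mod_def using h UZ_mult by blast
next
  fix c x assume c: "c \<in> Zset" and "x \<in> TUZ_mod n i"
  then obtain a where h: "a \<in> UZ n" "rel_cong n (Tfree i a) x" unfolding TUZ_mod_def by blast
  have "rel_cong n (Tfree i (sc c * a)) (sc c * x)"
    using h by (simp add: Tfree_mult Tfree_sc rel_cong_mult_left)
  then show "sc c * x \<in> TUZ_mod n i"
    unfolding TUZ_mod_def using h c UZ_smult by blast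
next
  fix x y assume "x \<in> TUZ_mod n i" and "rel_cong n x y"
  then show "y \<in> TUZ_mod n i" unfolding TUZ_mod_def using rel_cong_trans by blast
qed

lemma Tfree_UZ_subset_UZ_mod:
  assumes "\<And>s. s \<in> UZ_gens n \<Longrightarrow> Tfree i s \<in> UZ_mod n"
  shows "Tfree i ` UZ n \<subseteq> UZ_mod n"
proof -
  have "UZ n \<subseteq> {x. Tfree i x \<in> UZ_mod n}"
    unfolding UZ_def using zclosed_UZ_mod[of n] assms
    by (intro zsubalg_subset)
       (auto simp: Tfree_1 Tfree_add Tfree_mult Tfree_sc
             intro: zclosed_one zclosed_smult zclosed_add zclosed_mult)
  then show ?thesis by blast
qed

lemma Tfree_UZ_mod_eq_if_generators:
  assumes fwd: "\<And>s. s \<in> UZ_gens n \<Longrightarrow> Tfree i s \<in> UZ_mod n"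
    and bwd: "\<And>s. s \<in> UZ_gens n \<Longrightarrow> s \<in> TUZ_mod n i"
  shows "{Tfree i x + y | x y. x \<in> UZ n \<and> y \<in> rel_ideal n}
       = {x + y | x y. x \<in> UZ n \<and> y \<in> rel_ideal n}"
proof (intro equalityI subsetI)
  fix z assume "z \<in> {Tfree i x + y | x y. x \<in> UZ n \<and> y \<in> rel_ideal n}"
  then obtain x y where h: "z = Tfree i x + y" "x \<in> UZ n" "y \<in> rel_ideal n" by blast
  then have "Tfree i x \<in> UZ_mod n" using Tfree_UZ_subset_UZ_mod[OF fwd] by blast
  then obtain x1 y1 where "Tfree i x = x1 + y1" "x1 \<in> UZ n" "y1 \<in> rel_ideal n"
    unfolding UZ_mod_def by blast
  with h have "z = x1 + (y1 + y)" "y1 + y \<in> rel_ideal n" by (auto simp: rel_ideal.add)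
  with \<open>x1 \<in> UZ n\<close> show "z \<in> {x + y | x y. x \<in> UZ n \<and> y \<in> rel_ideal n}" by blast
next
  fix z assume "z \<in> {x + y | x y. x \<in> UZ n \<and> y \<in> rel_ideal n}"
  then obtain x y where h: "z = x + y" "x \<in> UZ n" "y \<in> rel_ideal n" by blast
  have "UZ n \<subseteq> TUZ_mod n i" by (rule UZ_subset_zclosed[OF zclosed_TUZ_mod]) (use bwd in blast)
  with h obtain a where a: "a \<in> UZ n" "rel_cong n (Tfree i a) x" unfolding TUZ_mod_def by blast
  have "z = Tfree i a + (y - (Tfree i a - x))" using h by simp
  moreover have "y - (Tfree i a - x) \<in> rel_ideal n"
    using a h unfolding rel_cong_def by (blast intro: rel_ideal_diff)
  ultimately show "z \<in> {Tfree i x + y | x y. x \<in> UZ n \<and> y \<in> rel_ideal n}" using a by blast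
qed

lemma qcommutes_K_K: "k \<in> {1..n} \<Longrightarrow> l \<in> {1..n} \<Longrightarrow> qcommutes n (Kg k) (Kg l) 1"
  unfolding qcommutes_def using rel_K_K by simp

lemma qcommutes_Kinv_K: "k \<in> {1..n} \<Longrightarrow> l \<in> {1..n} \<Longrightarrow> qcommutes n (Kig k) (Kg l) 1"
  using qcommutes_inverse_left[OF qcommutes_K_K _ rel_K_Kinv rel_Kinv_K] by fastforce

lemma qcommutes_K_Kinv: "k \<in> {1..n} \<Longrightarrow> l \<in> {1..n} \<Longrightarrow> qcommutes n (Kg k) (Kig l) 1"
  using qcommutes_swap[OF qcommutes_Kinv_K[where k = l and l = k and n = n]] by fastforce

lemma qcommutes_Kinv_Kinv: "k \<in> {1..n} \<Longrightarrow> l \<in> {1..n} \<Longrightarrow> qcommutes n (Kig k) (Kig l) 1"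
  using qcommutes_inverse_left[OF qcommutes_K_Kinv _ rel_K_Kinv rel_Kinv_K] by fastforce

lemma qcommutes_K_E: "k \<in> {1..n} \<Longrightarrow> j \<in> {1..<n} \<Longrightarrow> qcommutes n (Kg k) (Eg j) (vpow (pair k j))"
  unfolding qcommutes_def using rel_K_E by (simp add: mult.assoc)

lemma qcommutes_K_F: "k \<in> {1..n} \<Longrightarrow> j \<in> {1..<n} \<Longrightarrow> qcommutes n (Kg k) (Fg j) (vpow (- pair k j))"
  unfolding qcommutes_def using rel_K_F by (simp add: mult.assoc)

lemma qcommutes_Kinv_E:
  "k \<in> {1..n} \<Longrightarrow> j \<in> {1..<n} \<Longrightarrow> qcommutes n (Kig k) (Eg j) (inverse (vpow (pair k j)))"
  by (rule qcommutes_inverse_left[OF qcommutes_K_E vpow_nonzero rel_K_Kinv rel_Kinv_K])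

lemma qcommutes_Kinv_F:
  "k \<in> {1..n} \<Longrightarrow> j \<in> {1..<n} \<Longrightarrow> qcommutes n (Kig k) (Fg j) (inverse (vpow (- pair k j)))"
  by (rule qcommutes_inverse_left[OF qcommutes_K_F vpow_nonzero rel_K_Kinv rel_Kinv_K])

abbreviation Kt :: "nat \<Rightarrow> alg" where
  "Kt i \<equiv> Kg i * Kig (Suc i)"

abbreviation Kt_inv :: "nat \<Rightarrow> alg" where
  "Kt_inv i \<equiv> Kig i * Kg (Suc i)"

abbreviation EF_comm :: "nat \<Rightarrow> alg" where
  "EF_comm i \<equiv> (Kt i - Kt_inv i) * sc (1 / (vv - inverse vv))"

abbreviation E_comm :: "nat \<Rightarrow> nat \<Rightarrow> alg" where
  "E_comm i j \<equiv> Eg i * Eg j - sc (inverse vv) * (Eg j * Eg i)"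

abbreviation F_comm :: "nat \<Rightarrow> nat \<Rightarrow> alg" where
  "F_comm i j \<equiv> Fg j * Fg i - sc vv * (Fg i * Fg j)"

lemma rel_E_F_self: "k \<in> {1..<n} \<Longrightarrow> Eg k * Fg k - Fg k * Eg k - EF_comm k \<in> rel_ideal n"
  using rel_E_F[of k n k] unfolding rel_cong_def by (simp add: dl_def)

lemma rel_E_F_commute: "k \<in> {1..<n} \<Longrightarrow> j \<in> {1..<n} \<Longrightarrow> k \<noteq> j \<Longrightarrow> rel_cong n (Eg k * Fg j) (Fg j * Eg k)"
  using rel_E_F[of k n j] unfolding rel_cong_def by (simp add: dl_def)

section \<open>The braid automorphism on the generators\<close>

lemma index_relation_cases:
  fixes i j :: nat
  obtains (self) "j = i"
    | (adjacent) "j \<noteq> i" "i + 1 = j \<or> j + 1 = i"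
    | (distant) "j \<noteq> i" "\<not> (i + 1 = j \<or> j + 1 = i)"
  by blast

lemma swp_swp: "swp i (swp i k) = k"
  by (auto simp: swp_def)

lemma Tfree_qbinK: "Tfree i (qbinK k t) = qbinK (swp i k) t"
  by (simp add: qbinK_def Tfree_prod_list o_def Tfree_mult Tfree_diff Tfree_g Tfree_sc)

context
  fixes n i :: nat
  assumes i: "1 \<le> i" "i < n"
begin

lemma i_range: "i \<in> {1..n}" "Suc i \<in> {1..n}" "i \<in> {1..<n}"
  using i by auto

lemma swp_range: "k \<in> {1..n} \<Longrightarrow> swp i k \<in> {1..n}"
  using i by (auto simp: swp_def)

lemma qcommutes_Kt_F: "qcommutes n (Kt i) (Fg i) (inverse vv * inverse vv)"
  using qcommutes_mult_left[OF qcommutes_K_F[OF i_range(1,3)] qcommutes_Kinv_F[OF i_range(2,3)]]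
  by (simp add: pair_def)

lemma qcommutes_Kt_inv_E: "qcommutes n (Kt_inv i) (Eg i) (inverse vv * inverse vv)"
  using qcommutes_mult_left[OF qcommutes_Kinv_E[OF i_range(1,3)] qcommutes_K_E[OF i_range(2,3)]]
  by (simp add: pair_def)

lemma qcommutes_Kt_Kt_inv: "qcommutes n (Kt i) (Kt_inv i) 1"
  using qcommutes_mult_left[OF
      qcommutes_mult_right[OF qcommutes_K_Kinv[OF i_range(1,1)] qcommutes_K_K[OF i_range(1,2)]]
      qcommutes_mult_right[OF qcommutes_Kinv_Kinv[OF i_range(2,1)] qcommutes_Kinv_K[OF i_range(2,2)]]]
  by simp

lemma Kt_mult_Kt_inv: "rel_cong n (Kt i * Kt_inv i) 1"
proof -
  have "Kt i * Kt_inv i = Kg i * (Kig (Suc i) * Kig i) * Kg (Suc i)" by (simp add: mult.assoc)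
  also have "rel_cong n \<dots> (Kg i * (sc 1 * (Kig i * Kig (Suc i))) * Kg (Suc i))"
    using qcommutes_Kinv_Kinv[OF i_range(2,1)] unfolding qcommutes_def
    by (intro rel_cong_mult_left rel_cong_mult_right)
  also have "\<dots> = (Kg i * Kig i) * (Kig (Suc i) * Kg (Suc i))" by (simp add: mult.assoc)
  also have "rel_cong n \<dots> (1 * 1)" by (intro rel_cong_mult rel_K_Kinv rel_Kinv_K i_range)
  finally show ?thesis by simp
qed

lemma Kt_inv_mult_Kt: "rel_cong n (Kt_inv i * Kt i) 1"
proof -
  have "Kt_inv i * Kt i = Kig i * (Kg (Suc i) * Kg i) * Kig (Suc i)" by (simp add: mult.assoc)
  also have "rel_cong n \<dots> (Kig i * (sc 1 * (Kg i * Kg (Suc i))) * Kig (Suc i))"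
    using qcommutes_K_K[OF i_range(2,1)] unfolding qcommutes_def
    by (intro rel_cong_mult_left rel_cong_mult_right)
  also have "\<dots> = (Kig i * Kg i) * (Kg (Suc i) * Kig (Suc i))" by (simp add: mult.assoc)
  also have "rel_cong n \<dots> (1 * 1)" by (intro rel_cong_mult rel_K_Kinv rel_Kinv_K i_range)
  finally show ?thesis by simp
qed

lemma Tfree_Kt: "Tfree i (Kg (Suc i) * Kig i) = Kt i"
  by (simp add: Tfree_mult Tfree_g swp_def)

lemma Tfree_Kt_inv: "Tfree i (Kig (Suc i) * Kg i) = Kt_inv i"
  by (simp add: Tfree_mult Tfree_g swp_def)

lemma dpow_T_E_self:
  "rel_cong n (dpow (Tg i (GE i)) m)
     (sc ((-1) ^ m) * (sc ((inverse vv * inverse vv) ^ (\<Sum>k<m. k)) * (dpow (Fg i) m * Kt i ^ m)))"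
proof -
  have "Tg i (GE i) = - (Fg i * Kt i)" by (simp add: mult.assoc)
  then have "dpow (Tg i (GE i)) m = sc ((-1) ^ m) * dpow (Fg i * Kt i) m"
    by (simp add: dpow_uminus)
  also have "rel_cong n \<dots>
      (sc ((-1) ^ m) * (sc ((inverse vv * inverse vv) ^ (\<Sum>k<m. k)) * (dpow (Fg i) m * Kt i ^ m)))"
    by (intro rel_cong_mult_left dpow_mult_qcommutes_right qcommutes_Kt_F)
  finally show ?thesis .
qed

lemma dpow_T_F_self:
  "rel_cong n (dpow (Tg i (GF i)) m)
     (sc ((-1) ^ m) * (sc ((vv * vv) ^ (\<Sum>k<m. k)) * (Kt_inv i ^ m * dpow (Eg i) m)))"
proof -
  have "Tg i (GF i) = - (Kt_inv i * Eg i)" by (simp add: mult.assoc)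
  then have "dpow (Tg i (GF i)) m = sc ((-1) ^ m) * dpow (Kt_inv i * Eg i) m"
    by (simp add: dpow_uminus)
  also have "rel_cong n \<dots>
      (sc ((-1) ^ m) * (sc ((vv * vv) ^ (\<Sum>k<m. k)) * (Kt_inv i ^ m * dpow (Eg i) m)))"
    using qcommutes_swap[OF qcommutes_Kt_inv_E]
    by (intro rel_cong_mult_left dpow_mult_qcommutes_left) simp
  finally show ?thesis .
qed

lemma power_Kt_mult_power_Kt_inv: "rel_cong n (Kt i ^ m * Kt_inv i ^ m) 1"
  by (rule rel_cong_power_mult_inverse[OF Kt_mult_Kt_inv qcommutes_Kt_Kt_inv])

lemma dpow_E_self_cong:
  "rel_cong n (sc ((-1) ^ m) * (sc ((inverse vv * inverse vv) ^ (\<Sum>k<m. k))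
                 * (Kt i ^ m * dpow (Tg i (GF i)) m)))
              (dpow (Eg i) m)"
proof -
  let ?s = "\<Sum>k<m. k"
  have "rel_cong n (sc ((-1) ^ m) * (sc ((inverse vv * inverse vv) ^ ?s) * (Kt i ^ m * dpow (Tg i (GF i)) m)))
     (sc ((-1) ^ m) * (sc ((inverse vv * inverse vv) ^ ?s)
        * (Kt i ^ m * (sc ((-1) ^ m) * (sc ((vv * vv) ^ ?s) * (Kt_inv i ^ m * dpow (Eg i) m))))))"
    by (intro rel_cong_mult_left dpow_T_F_self)
  also have "\<dots> = sc (((-1) ^ m * (-1) ^ m) * ((inverse vv * inverse vv) ^ ?s * (vv * vv) ^ ?s))
                   * ((Kt i ^ m * Kt_inv i ^ m) * dpow (Eg i) m)"
    by (simp add: sc_normalize mult.assoc mult.commute mult.left_commute)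
  also have "\<dots> = (Kt i ^ m * Kt_inv i ^ m) * dpow (Eg i) m"
    by (simp only: minus_one_power_square vv_square_inverse_power mult_1 sc_1 mult_1_left)
  also have "rel_cong n \<dots> (1 * dpow (Eg i) m)"
    by (intro rel_cong_mult_right power_Kt_mult_power_Kt_inv)
  finally show ?thesis by simp
qed

lemma dpow_F_self_cong:
  "rel_cong n (sc ((-1) ^ m) * (sc ((vv * vv) ^ (\<Sum>k<m. k)) * (dpow (Tg i (GE i)) m * Kt_inv i ^ m)))
              (dpow (Fg i) m)"
proof -
  let ?s = "\<Sum>k<m. k"
  have "rel_cong n (sc ((-1) ^ m) * (sc ((vv * vv) ^ ?s) * (dpow (Tg i (GE i)) m * Kt_inv i ^ m)))
     (sc ((-1) ^ m) * (sc ((vv * vv) ^ ?s) * ((sc ((-1) ^ m)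
        * (sc ((inverse vv * inverse vv) ^ ?s) * (dpow (Fg i) m * Kt i ^ m))) * Kt_inv i ^ m)))"
    by (intro rel_cong_mult_left rel_cong_mult_right dpow_T_E_self)
  also have "\<dots> = sc (((-1) ^ m * (-1) ^ m) * ((inverse vv * inverse vv) ^ ?s * (vv * vv) ^ ?s))
                   * (dpow (Fg i) m * (Kt i ^ m * Kt_inv i ^ m))"
    by (simp add: sc_normalize mult.assoc mult.commute mult.left_commute)
  also have "\<dots> = dpow (Fg i) m * (Kt i ^ m * Kt_inv i ^ m)"
    by (simp only: minus_one_power_square vv_square_inverse_power mult_1 sc_1 mult_1_left)
  also have "rel_cong n \<dots> (dpow (Fg i) m * 1)"
    by (intro rel_cong_mult_left power_Kt_mult_power_Kt_inv)
  finally show ?thesis by simp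
qed

context
  fixes j :: nat
  assumes j: "j \<in> {1..<n}" and adj: "i + 1 = j \<or> j + 1 = i"
begin

lemma T_E_adj: "Tg i (GE j) = - E_comm i j"
  using adj by (auto simp: algebra_simps)

lemma T_F_adj: "Tg i (GF j) = - F_comm i j"
  using adj by (auto simp: algebra_simps)

lemma E_adj_F_self_commute: "Eg j * Fg i - Fg i * Eg j \<in> rel_ideal n"
  using rel_E_F_commute[OF j i_range(3)] adj unfolding rel_cong_def by auto

lemma E_self_F_adj_commute: "Eg i * Fg j - Fg j * Eg i \<in> rel_ideal n"
  using rel_E_F_commute[OF i_range(3) j] adj unfolding rel_cong_def by auto

lemma qcommutes_Kt_E_adj: "qcommutes n (Kt i) (Eg j) (inverse vv)"
  using qcommutes_mult_left[OF qcommutes_K_E[OF i_range(1) j] qcommutes_Kinv_E[OF i_range(2) j]] adj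
  by (auto simp: pair_def)

lemma qcommutes_Kt_inv_E_adj: "qcommutes n (Kt_inv i) (Eg j) vv"
  using qcommutes_inverse_left[OF qcommutes_Kt_E_adj _ Kt_mult_Kt_inv Kt_inv_mult_Kt] by simp

lemma qcommutes_Kt_E_self: "qcommutes n (Kt i) (Eg i) (vv * vv)"
  using qcommutes_mult_left[OF qcommutes_K_E[OF i_range(1,3)] qcommutes_Kinv_E[OF i_range(2,3)]]
  by (simp add: pair_def)

lemma qcommutes_Kt_E_comm: "qcommutes n (Kt i) (E_comm i j) vv"
proof -
  have "qcommutes n (Kt i) (Eg i * Eg j) vv"
    using qcommutes_mult_right[OF qcommutes_Kt_E_self qcommutes_Kt_E_adj] by (simp add: field_simps)
  moreover have "qcommutes n (Kt i) (Eg j * Eg i) vv"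
    using qcommutes_mult_right[OF qcommutes_Kt_E_adj qcommutes_Kt_E_self] by (simp add: field_simps)
  ultimately show ?thesis by (intro qcommutes_diff qcommutes_smult)
qed

lemma E_comm_F_self_commutator:
  "rel_cong n (E_comm i j * Fg i - Fg i * E_comm i j)
              (EF_comm i * Eg j - sc (inverse vv) * (Eg j * EF_comm i))"
proof -
  let ?r1 = "Eg i * Fg i - Fg i * Eg i - EF_comm i" and ?r2 = "Eg j * Fg i - Fg i * Eg j"
  have r1: "?r1 \<in> rel_ideal n" by (rule rel_E_F_self[OF i_range(3)])
  have r2: "?r2 \<in> rel_ideal n" by (rule E_adj_F_self_commute)
  have "(E_comm i j * Fg i - Fg i * E_comm i j) - (EF_comm i * Eg j - sc (inverse vv) * (Eg j * EF_comm i))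
      = ?r1 * Eg j - (sc (inverse vv) * Eg j) * ?r1 + Eg i * ?r2 - (sc (inverse vv) * ?r2) * Eg i"
    by (simp add: algebra_simps sc_normalize)
  also have "\<dots> \<in> rel_ideal n"
    by (intro rel_ideal_diff[OF rel_ideal.add[OF rel_ideal_diff] rel_ideal_mult_right]
          rel_ideal_mult_left rel_ideal_mult_right r1 r2)
  finally show ?thesis unfolding rel_cong_def .
qed

lemma EF_comm_E_adj_commutator:
  "rel_cong n (EF_comm i * Eg j - sc (inverse vv) * (Eg j * EF_comm i)) (- (Eg j * Kt_inv i))"
proof -
  define c where "c = 1 / (vv - inverse vv)"
  let ?s1 = "Kt i * Eg j - sc (inverse vv) * (Eg j * Kt i)"
    and ?s2 = "Kt_inv i * Eg j - sc vv * (Eg j * Kt_inv i)"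
  have s1: "?s1 \<in> rel_ideal n" using qcommutes_Kt_E_adj unfolding qcommutes_def rel_cong_def .
  have s2: "?s2 \<in> rel_ideal n" using qcommutes_Kt_inv_E_adj unfolding qcommutes_def rel_cong_def .
  have z: "1 + c * (inverse vv - vv) = 0"
    using vv_diff_inverse_neq_0 by (simp add: field_simps c_def)
  have "(EF_comm i * Eg j - sc (inverse vv) * (Eg j * EF_comm i)) - (- (Eg j * Kt_inv i))
      = sc c * ?s1 - sc c * ?s2 + sc (1 + c * (inverse vv - vv)) * (Eg j * Kt_inv i)"
    unfolding c_def[symmetric] by (simp add: algebra_simps sc_normalize)
  also have "\<dots> = sc c * ?s1 - sc c * ?s2" by (simp only: z sc_0 mult_zero_left add_0_right)
  also have "\<dots> \<in> rel_ideal n" by (intro rel_ideal_diff rel_ideal_mult_left s1 s2)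
  finally show ?thesis unfolding rel_cong_def .
qed

lemma E_comm_mult_T_E_self:
  "rel_cong n (E_comm i j * (Fg i * Kt i)) (sc (inverse vv) * ((Fg i * Kt i) * E_comm i j) + - Eg j)"
proof -
  have "E_comm i j * (Fg i * Kt i) = (E_comm i j * Fg i - Fg i * E_comm i j) * Kt i + Fg i * E_comm i j * Kt i"
    by (simp add: algebra_simps)
  also have "rel_cong n \<dots> ((- (Eg j * Kt_inv i)) * Kt i + Fg i * E_comm i j * Kt i)"
    by (intro rel_cong_add rel_cong_mult_right rel_cong_refl
          rel_cong_trans[OF E_comm_F_self_commutator EF_comm_E_adj_commutator])
  also have "\<dots> = - (Eg j * (Kt_inv i * Kt i)) + Fg i * E_comm i j * Kt i" by (simp add: mult.assoc)
  also have "rel_cong n \<dots> (- (Eg j * 1) + Fg i * E_comm i j * Kt i)"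
    by (intro rel_cong_add rel_cong_uminus rel_cong_mult_left rel_cong_refl Kt_inv_mult_Kt)
  finally have l: "rel_cong n (E_comm i j * (Fg i * Kt i)) (Fg i * E_comm i j * Kt i - Eg j)"
    by (simp add: algebra_simps)
  have "sc (inverse vv) * ((Fg i * Kt i) * E_comm i j) + - Eg j
      = sc (inverse vv) * (Fg i * (Kt i * E_comm i j)) - Eg j"
    by (simp add: mult.assoc)
  also have "rel_cong n \<dots> (sc (inverse vv) * (Fg i * (sc vv * (E_comm i j * Kt i))) - Eg j)"
    using qcommutes_Kt_E_comm unfolding qcommutes_def
    by (intro rel_cong_diff rel_cong_mult_left rel_cong_refl)
  also have "\<dots> = Fg i * E_comm i j * Kt i - Eg j" by (simp add: sc_normalize mult.assoc)
  finally have r: "rel_cong n (sc (inverse vv) * ((Fg i * Kt i) * E_comm i j) + - Eg j)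
                             (Fg i * E_comm i j * Kt i - Eg j)" .
  show ?thesis by (rule rel_cong_trans[OF l rel_cong_sym[OF r]])
qed

lemma qcommutes_E_comm_E_adj: "qcommutes n (E_comm i j) (- Eg j) vv"
proof -
  have "qcommutes n (Eg i * Eg j - sc (inverse vv) * (Eg j * Eg i)) (Eg j) vv"
    using serre_qcommutes_right[OF vv_neq_0 rel_Serre_E[OF j i_range(3)]] adj by auto
  from rel_cong_uminus[OF this[unfolded qcommutes_def]] show ?thesis
    unfolding qcommutes_def by simp
qed

lemma qcommutes_E_adj_T_E_self: "qcommutes n (- Eg j) (Fg i * Kt i) vv"
proof -
  have "Eg j * (Fg i * Kt i) = (Eg j * Fg i) * Kt i" by (simp add: mult.assoc)
  also have "rel_cong n \<dots> ((Fg i * Eg j) * Kt i)"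
    using E_adj_F_self_commute unfolding rel_cong_def[symmetric] by (intro rel_cong_mult_right)
  also have "\<dots> = Fg i * (Eg j * Kt i)" by (simp add: mult.assoc)
  also have "rel_cong n \<dots> (Fg i * (sc vv * (Kt i * Eg j)))"
    using qcommutes_swap[OF qcommutes_Kt_E_adj] unfolding qcommutes_def by (intro rel_cong_mult_left) simp
  also have "\<dots> = sc vv * ((Fg i * Kt i) * Eg j)" by (simp add: sc_normalize mult.assoc)
  finally show ?thesis using rel_cong_uminus unfolding qcommutes_def by fastforce
qed

text \<open>\<open>-T_i(E_j) = E_comm i j\<close> and \<open>-T_i(E_i) = F_i K_i K_{i+1}^-1\<close> have \<open>v\<close>-commutator \<open>-E_j\<close>.\<close>
lemma dpow_E_adj_in_TUZ_mod: "dpow (Eg j) m \<in> TUZ_mod n i"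
proof -
  have C: "zclosed n (TUZ_mod n i)" by (rule zclosed_TUZ_mod)
  have "dpow (- E_comm i j) a \<in> TUZ_mod n i" for a
    using Tfree_in_TUZ_mod[OF UZ_dpow_E[OF j], of i a] by (simp only: Tfree_dpow Tfree_g T_E_adj)
  then have A: "dpow (E_comm i j) a \<in> TUZ_mod n i" for a
    by (simp only: zclosed_dpow_uminus_iff[OF C])
  have "Tg i (GE i) = - (Fg i * Kt i)" by (simp add: mult.assoc)
  then have "dpow (- (Fg i * Kt i)) b \<in> TUZ_mod n i" for b
    using Tfree_in_TUZ_mod[OF UZ_dpow_E[OF i_range(3)], of i b] by (simp only: Tfree_dpow Tfree_g)
  then have B: "dpow (Fg i * Kt i) b \<in> TUZ_mod n i" for b
    by (simp only: zclosed_dpow_uminus_iff[OF C])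
  have "dpow (- Eg j) m \<in> TUZ_mod n i"
    by (rule dpow_commutator_closed[OF _ E_comm_mult_T_E_self qcommutes_E_comm_E_adj
                                          qcommutes_E_adj_T_E_self C A B])
       (simp add: vparam_def)
  then show ?thesis by (simp only: zclosed_dpow_uminus_iff[OF C])
qed

lemma qcommutes_Kt_inv_F_adj: "qcommutes n (Kt_inv i) (Fg j) (inverse vv)"
  using qcommutes_mult_left[OF qcommutes_Kinv_F[OF i_range(1) j] qcommutes_K_F[OF i_range(2) j]] adj
  by (auto simp: pair_def)

lemma qcommutes_Kt_F_adj: "qcommutes n (Kt i) (Fg j) vv"
  using qcommutes_inverse_left[OF qcommutes_Kt_inv_F_adj _ Kt_inv_mult_Kt Kt_mult_Kt_inv] by simp

lemma qcommutes_Kt_inv_F_self: "qcommutes n (Kt_inv i) (Fg i) (vv * vv)"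
  using qcommutes_mult_left[OF qcommutes_Kinv_F[OF i_range(1,3)] qcommutes_K_F[OF i_range(2,3)]]
  by (simp add: pair_def)

lemma qcommutes_Kt_inv_F_comm: "qcommutes n (Kt_inv i) (F_comm i j) vv"
proof -
  have "qcommutes n (Kt_inv i) (Fg j * Fg i) vv"
    using qcommutes_mult_right[OF qcommutes_Kt_inv_F_adj qcommutes_Kt_inv_F_self]
    by (simp add: field_simps)
  moreover have "qcommutes n (Kt_inv i) (Fg i * Fg j) vv"
    using qcommutes_mult_right[OF qcommutes_Kt_inv_F_self qcommutes_Kt_inv_F_adj]
    by (simp add: field_simps)
  ultimately show ?thesis by (intro qcommutes_diff qcommutes_smult)
qed

lemma E_self_F_comm_commutator:
  "rel_cong n (Eg i * F_comm i j - F_comm i j * Eg i) (Fg j * EF_comm i - sc vv * (EF_comm i * Fg j))"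
proof -
  let ?r1 = "Eg i * Fg i - Fg i * Eg i - EF_comm i" and ?r3 = "Eg i * Fg j - Fg j * Eg i"
  have r1: "?r1 \<in> rel_ideal n" by (rule rel_E_F_self[OF i_range(3)])
  have r3: "?r3 \<in> rel_ideal n" by (rule E_self_F_adj_commute)
  have "(Eg i * F_comm i j - F_comm i j * Eg i) - (Fg j * EF_comm i - sc vv * (EF_comm i * Fg j))
      = ?r3 * Fg i + Fg j * ?r1 - (sc vv * ?r1) * Fg j - (sc vv * Fg i) * ?r3"
    by (simp add: algebra_simps sc_normalize)
  also have "\<dots> \<in> rel_ideal n"
    by (rule rel_ideal_diff[OF rel_ideal_diff[OF rel_ideal.add[OF rel_ideal_mult_right[OF r3]
          rel_ideal_mult_left[OF r1]] rel_ideal_mult_right[OF rel_ideal_mult_left[OF r1]]]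
          rel_ideal_mult_left[OF r3]])
  finally show ?thesis unfolding rel_cong_def .
qed

lemma F_adj_EF_comm_commutator:
  "rel_cong n (Fg j * EF_comm i - sc vv * (EF_comm i * Fg j)) (- (sc vv * (Fg j * Kt i)))"
proof -
  define c where "c = 1 / (vv - inverse vv)"
  let ?s3 = "Kt i * Fg j - sc vv * (Fg j * Kt i)"
    and ?s4 = "Kt_inv i * Fg j - sc (inverse vv) * (Fg j * Kt_inv i)"
  have s3: "?s3 \<in> rel_ideal n" using qcommutes_Kt_F_adj unfolding qcommutes_def rel_cong_def .
  have s4: "?s4 \<in> rel_ideal n" using qcommutes_Kt_inv_F_adj unfolding qcommutes_def rel_cong_def .
  have z1: "c + vv - vv * c * vv = 0" using vv_diff_inverse_neq_0 by (simp add: field_simps c_def)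
  have z2: "vv * c * inverse vv - c = 0" by simp
  have "(Fg j * EF_comm i - sc vv * (EF_comm i * Fg j)) - (- (sc vv * (Fg j * Kt i)))
      = sc (- (vv * c)) * ?s3 + sc (vv * c) * ?s4 + sc (c + vv - vv * c * vv) * (Fg j * Kt i)
        + sc (vv * c * inverse vv - c) * (Fg j * Kt_inv i)"
    unfolding c_def[symmetric] by (simp add: algebra_simps sc_normalize)
  also have "\<dots> = sc (- (vv * c)) * ?s3 + sc (vv * c) * ?s4"
    by (simp only: z1 z2 sc_0 mult_zero_left add_0_right)
  also have "\<dots> \<in> rel_ideal n" by (intro rel_ideal.add rel_ideal_mult_left s3 s4)
  finally show ?thesis unfolding rel_cong_def .
qed

lemma T_F_self_mult_F_comm:
  "rel_cong n ((Kt_inv i * Eg i) * F_comm i j)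
     (sc (inverse (inverse vv)) * (F_comm i j * (Kt_inv i * Eg i)) + - Fg j)"
proof -
  have swap: "qcommutes n (F_comm i j) (Kt_inv i) (inverse vv)"
    using qcommutes_swap[OF qcommutes_Kt_inv_F_comm] by simp
  have "(Kt_inv i * Eg i) * F_comm i j
      = Kt_inv i * (Eg i * F_comm i j - F_comm i j * Eg i) + Kt_inv i * F_comm i j * Eg i"
    by (simp add: algebra_simps)
  also have "rel_cong n \<dots> (Kt_inv i * (- (sc vv * (Fg j * Kt i))) + Kt_inv i * F_comm i j * Eg i)"
    by (intro rel_cong_add rel_cong_mult_left rel_cong_refl
          rel_cong_trans[OF E_self_F_comm_commutator F_adj_EF_comm_commutator])
  also have "\<dots> = - (sc vv * ((Kt_inv i * Fg j) * Kt i)) + Kt_inv i * F_comm i j * Eg i"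
    by (simp add: sc_normalize mult.assoc)
  also have "rel_cong n \<dots> (- (sc vv * ((sc (inverse vv) * (Fg j * Kt_inv i)) * Kt i))
                           + Kt_inv i * F_comm i j * Eg i)"
    using qcommutes_Kt_inv_F_adj unfolding qcommutes_def
    by (intro rel_cong_add rel_cong_uminus rel_cong_mult_left rel_cong_mult_right rel_cong_refl)
  also have "\<dots> = - (Fg j * (Kt_inv i * Kt i)) + Kt_inv i * F_comm i j * Eg i"
    by (simp add: sc_normalize mult.assoc)
  also have "rel_cong n \<dots> (- (Fg j * 1) + Kt_inv i * F_comm i j * Eg i)"
    by (intro rel_cong_add rel_cong_uminus rel_cong_mult_left rel_cong_refl Kt_inv_mult_Kt)
  finally have l: "rel_cong n ((Kt_inv i * Eg i) * F_comm i j) (Kt_inv i * F_comm i j * Eg i - Fg j)"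
    by (simp add: algebra_simps)
  have "sc (inverse (inverse vv)) * (F_comm i j * (Kt_inv i * Eg i)) + - Fg j
      = sc vv * ((F_comm i j * Kt_inv i) * Eg i) - Fg j"
    by (simp add: mult.assoc)
  also have "rel_cong n \<dots> (sc vv * ((sc (inverse vv) * (Kt_inv i * F_comm i j)) * Eg i) - Fg j)"
    using swap unfolding qcommutes_def by (intro rel_cong_diff rel_cong_mult_left rel_cong_mult_right rel_cong_refl)
  also have "\<dots> = Kt_inv i * F_comm i j * Eg i - Fg j" by (simp add: sc_normalize mult.assoc)
  finally have r: "rel_cong n (sc (inverse (inverse vv)) * (F_comm i j * (Kt_inv i * Eg i)) + - Fg j)
                             (Kt_inv i * F_comm i j * Eg i - Fg j)" .
  show ?thesis by (rule rel_cong_trans[OF l rel_cong_sym[OF r]])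
qed

lemma qcommutes_T_F_self_F_adj: "qcommutes n (Kt_inv i * Eg i) (- Fg j) (inverse vv)"
proof -
  have "Kt_inv i * Eg i * Fg j = Kt_inv i * (Eg i * Fg j)" by (simp add: mult.assoc)
  also have "rel_cong n \<dots> (Kt_inv i * (Fg j * Eg i))"
    using E_self_F_adj_commute unfolding rel_cong_def[symmetric] by (intro rel_cong_mult_left)
  also have "\<dots> = (Kt_inv i * Fg j) * Eg i" by (simp add: mult.assoc)
  also have "rel_cong n \<dots> ((sc (inverse vv) * (Fg j * Kt_inv i)) * Eg i)"
    using qcommutes_Kt_inv_F_adj unfolding qcommutes_def by (intro rel_cong_mult_right)
  also have "\<dots> = sc (inverse vv) * (Fg j * (Kt_inv i * Eg i))" by (simp add: sc_normalize mult.assoc)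
  finally show ?thesis using rel_cong_uminus unfolding qcommutes_def by fastforce
qed

lemma qcommutes_F_adj_F_comm: "qcommutes n (- Fg j) (F_comm i j) (inverse vv)"
proof -
  have "rel_cong n (Fg j ^ 2 * Fg i - sc (inverse vv + inverse (inverse vv)) * Fg j * Fg i * Fg j
                    + Fg i * Fg j ^ 2) 0"
    using rel_Serre_F[OF j i_range(3)] adj by (auto simp: add.commute)
  from serre_qcommutes_left[OF _ this] have "qcommutes n (Fg j) (F_comm i j) (inverse vv)" by simp
  from rel_cong_uminus[OF this[unfolded qcommutes_def]] show ?thesis
    unfolding qcommutes_def by simp
qed

text \<open>\<open>-T_i(F_i) = K_i^-1 K_{i+1} E_i\<close> and \<open>-T_i(F_j) = F_comm i j\<close> have \<open>v^-1\<close>-commutator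
  \<open>-F_j\<close>.\<close>
lemma dpow_F_adj_in_TUZ_mod: "dpow (Fg j) m \<in> TUZ_mod n i"
proof -
  have C: "zclosed n (TUZ_mod n i)" by (rule zclosed_TUZ_mod)
  have "Tg i (GF i) = - (Kt_inv i * Eg i)" by (simp add: mult.assoc)
  then have "dpow (- (Kt_inv i * Eg i)) a \<in> TUZ_mod n i" for a
    using Tfree_in_TUZ_mod[OF UZ_dpow_F[OF i_range(3)], of i a] by (simp only: Tfree_dpow Tfree_g)
  then have A: "dpow (Kt_inv i * Eg i) a \<in> TUZ_mod n i" for a
    by (simp only: zclosed_dpow_uminus_iff[OF C])
  have "dpow (- F_comm i j) b \<in> TUZ_mod n i" for b
    using Tfree_in_TUZ_mod[OF UZ_dpow_F[OF j], of i b] by (simp only: Tfree_dpow Tfree_g T_F_adj)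
  then have B: "dpow (F_comm i j) b \<in> TUZ_mod n i" for b
    by (simp only: zclosed_dpow_uminus_iff[OF C])
  have "dpow (- Fg j) m \<in> TUZ_mod n i"
    by (rule dpow_commutator_closed[OF _ T_F_self_mult_F_comm qcommutes_T_F_self_F_adj
                                          qcommutes_F_adj_F_comm C A B])
       (simp add: vparam_def)
  then show ?thesis by (simp only: zclosed_dpow_uminus_iff[OF C])
qed

end

lemma Tfree_K_in_UZ_mod: "k \<in> {1..n} \<Longrightarrow> Tfree i (Kg k) \<in> UZ_mod n"
  using swp_range by (simp add: Tfree_g UZ_in_UZ_mod UZ_K)

lemma Tfree_Kinv_in_UZ_mod: "k \<in> {1..n} \<Longrightarrow> Tfree i (Kig k) \<in> UZ_mod n"
  using swp_range by (simp add: Tfree_g UZ_in_UZ_mod UZ_Kinv)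

lemma Tfree_qbinK_in_UZ_mod: "k \<in> {1..n} \<Longrightarrow> Tfree i (qbinK k t) \<in> UZ_mod n"
  using swp_range by (simp add: Tfree_qbinK UZ_in_UZ_mod UZ_qbinK)

lemma Tfree_Kbar_in_UZ_mod:
  assumes k: "k \<in> {1..n}"
  shows "Tfree i (Kbg k) \<in> UZ_mod n"
proof (cases "k = i + 1")
  case True
  then have "Tfree i (Kbg k) = sc (vv - inverse vv) * Kbg (i + 1) * Fg i * Eg i
                              - sc (vv - inverse vv) * Fg i * Eg i * Kbg (i + 1) + Kbg i"
    by (simp add: Tfree_g)
  also have "\<dots> \<in> UZ_mod n"
    using i_range
    by (simp only: mult.assoc)
       (intro zclosed_add[OF zclosed_UZ_mod] zclosed_diff[OF zclosed_UZ_mod]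
          zclosed_vv_diff_inverse[OF zclosed_UZ_mod] zclosed_mult[OF zclosed_UZ_mod]
          UZ_in_UZ_mod UZ_Kbar UZ_F UZ_E; simp)
  finally show ?thesis .
next
  case False
  then show ?thesis using k i_range by (simp add: Tfree_g UZ_in_UZ_mod UZ_Kbar)
qed

lemma Tfree_Ebar_in_UZ_mod:
  assumes j: "j \<in> {1..<n}"
  shows "Tfree i (Ebg j) \<in> UZ_mod n"
proof (cases rule: index_relation_cases[of j i])
  case self
  then have "Tfree i (Ebg j) = - Kbg (i + 1) * Fg i * Kg i + sc vv * Fg i * Kbg (i + 1) * Kg i"
    by (simp add: Tfree_g)
  also have "\<dots> \<in> UZ_mod n"
    using i_range
    by (simp only: mult.assoc)
       (intro zclosed_add[OF zclosed_UZ_mod] zclosed_uminus[OF zclosed_UZ_mod]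
          zclosed_smult[OF zclosed_UZ_mod] zclosed_mult[OF zclosed_UZ_mod]
          UZ_in_UZ_mod UZ_Kbar UZ_F UZ_K Zset_vv; simp)
  finally show ?thesis .
next
  case adjacent
  then have "Tfree i (Ebg j) = - Eg i * Ebg j + sc (inverse vv) * Ebg j * Eg i"
    by (simp add: Tfree_g)
  also have "\<dots> \<in> UZ_mod n"
    using i_range j
    by (simp only: mult.assoc)
       (intro zclosed_add[OF zclosed_UZ_mod] zclosed_uminus[OF zclosed_UZ_mod]
          zclosed_smult[OF zclosed_UZ_mod] zclosed_mult[OF zclosed_UZ_mod]
          UZ_in_UZ_mod UZ_Ebar UZ_E Zset_inverse_vv; simp)
  finally show ?thesis .
next
  case distant
  then show ?thesis using j by (simp add: Tfree_g UZ_in_UZ_mod UZ_Ebar)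
qed

lemma Tfree_Fbar_in_UZ_mod:
  assumes j: "j \<in> {1..<n}"
  shows "Tfree i (Fbg j) \<in> UZ_mod n"
proof (cases rule: index_relation_cases[of j i])
  case self
  then have "Tfree i (Fbg j) = - Kig i * Eg i * Kbg (i + 1) + sc (inverse vv) * Kbg (i + 1) * Kig i * Eg i"
    by (simp add: Tfree_g)
  also have "\<dots> \<in> UZ_mod n"
    using i_range
    by (simp only: mult.assoc)
       (intro zclosed_add[OF zclosed_UZ_mod] zclosed_uminus[OF zclosed_UZ_mod]
          zclosed_smult[OF zclosed_UZ_mod] zclosed_mult[OF zclosed_UZ_mod]
          UZ_in_UZ_mod UZ_Kbar UZ_E UZ_Kinv Zset_inverse_vv; simp)
  finally show ?thesis .
next
  case adjacent
  then have "Tfree i (Fbg j) = - Fbg j * Fg i + sc vv * Fg i * Fbg j"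
    by (simp add: Tfree_g)
  also have "\<dots> \<in> UZ_mod n"
    using i_range j
    by (simp only: mult.assoc)
       (intro zclosed_add[OF zclosed_UZ_mod] zclosed_uminus[OF zclosed_UZ_mod]
          zclosed_smult[OF zclosed_UZ_mod] zclosed_mult[OF zclosed_UZ_mod]
          UZ_in_UZ_mod UZ_Fbar UZ_F Zset_vv; simp)
  finally show ?thesis .
next
  case distant
  then show ?thesis using j by (simp add: Tfree_g UZ_in_UZ_mod UZ_Fbar)
qed

lemma Tfree_dpow_E_in_UZ_mod:
  assumes j: "j \<in> {1..<n}"
  shows "Tfree i (dpow (Eg j) m) \<in> UZ_mod n"
proof -
  have T: "Tfree i (dpow (Eg j) m) = dpow (Tg i (GE j)) m" by (simp only: Tfree_dpow Tfree_g)
  show ?thesis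
  proof (cases rule: index_relation_cases[of j i])
    case self
    have "sc ((-1) ^ m) * (sc ((inverse vv * inverse vv) ^ (\<Sum>k<m. k)) * (dpow (Fg i) m * Kt i ^ m))
          \<in> UZ n"
      by (intro UZ_smult Zset_minus_1_power Zset_inverse_vv_square_power
            UZ_mult UZ_power UZ_dpow_F UZ_K UZ_Kinv i_range)
    from zclosed_cong[OF zclosed_UZ_mod UZ_in_UZ_mod[OF this] rel_cong_sym[OF dpow_T_E_self]] self
    show ?thesis by (simp only: Tfree_dpow Tfree_g)
  next
    case adjacent
    have s2: "rel_cong n (Eg j ^ 2 * Eg i - sc (vv + inverse vv) * Eg j * Eg i * Eg j + Eg i * Eg j ^ 2) 0"
      using adjacent by (intro rel_Serre_E[OF j i_range(3)]) auto
    have "dpow (E_comm i j) m \<in> UZ_mod n"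
      by (rule dpow_serre_commutator_closed[OF _ rel_Serre_E[OF i_range(3) j adjacent(2)] s2 zclosed_UZ_mod])
         (auto simp: vparam_def intro: UZ_in_UZ_mod UZ_dpow_E i_range j)
    then show ?thesis
      unfolding T T_E_adj[OF j adjacent(2)] by (simp only: zclosed_dpow_uminus_iff[OF zclosed_UZ_mod])
  next
    case distant
    then show ?thesis unfolding T using j by (simp add: UZ_in_UZ_mod UZ_dpow_E)
  qed
qed

lemma Tfree_dpow_F_in_UZ_mod:
  assumes j: "j \<in> {1..<n}"
  shows "Tfree i (dpow (Fg j) m) \<in> UZ_mod n"
proof -
  have T: "Tfree i (dpow (Fg j) m) = dpow (Tg i (GF j)) m" by (simp only: Tfree_dpow Tfree_g)
  show ?thesis
  proof (cases rule: index_relation_cases[of j i])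
    case self
    have "sc ((-1) ^ m) * (sc ((vv * vv) ^ (\<Sum>k<m. k)) * (Kt_inv i ^ m * dpow (Eg i) m)) \<in> UZ n"
      by (intro UZ_smult Zset_minus_1_power Zset_vv_square_power
            UZ_mult UZ_power UZ_dpow_E UZ_K UZ_Kinv i_range)
    from zclosed_cong[OF zclosed_UZ_mod UZ_in_UZ_mod[OF this] rel_cong_sym[OF dpow_T_F_self]] self
    show ?thesis by (simp only: Tfree_dpow Tfree_g)
  next
    case adjacent
    have s1: "rel_cong n (Fg j ^ 2 * Fg i - sc (inverse vv + inverse (inverse vv)) * Fg j * Fg i * Fg j
                          + Fg i * Fg j ^ 2) 0"
      using rel_Serre_F[OF j i_range(3)] adjacent by (auto simp: add.commute)
    have s2: "rel_cong n (Fg i ^ 2 * Fg j - sc (inverse vv + inverse (inverse vv)) * Fg i * Fg j * Fg i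
                          + Fg j * Fg i ^ 2) 0"
      using rel_Serre_F[OF i_range(3) j] adjacent by (auto simp: add.commute)
    have "dpow (Fg j * Fg i - sc (inverse (inverse vv)) * (Fg i * Fg j)) m \<in> UZ_mod n"
      by (rule dpow_serre_commutator_closed[OF _ s1 s2 zclosed_UZ_mod])
         (auto simp: vparam_def intro: UZ_in_UZ_mod UZ_dpow_F i_range j)
    then have "dpow (F_comm i j) m \<in> UZ_mod n" by simp
    then show ?thesis
      unfolding T T_F_adj[OF j adjacent(2)] by (simp only: zclosed_dpow_uminus_iff[OF zclosed_UZ_mod])
  next
    case distant
    then show ?thesis unfolding T using j by (simp add: UZ_in_UZ_mod UZ_dpow_F)
  qed
qed

lemma Tfree_UZ_gen_in_UZ_mod: "s \<in> UZ_gens n \<Longrightarrow> Tfree i s \<in> UZ_mod n"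
  by (erule UZ_gens_cases)
     (simp_all add: Tfree_K_in_UZ_mod Tfree_Kinv_in_UZ_mod Tfree_Kbar_in_UZ_mod Tfree_qbinK_in_UZ_mod
        Tfree_Ebar_in_UZ_mod Tfree_Fbar_in_UZ_mod Tfree_dpow_E_in_UZ_mod Tfree_dpow_F_in_UZ_mod)

lemma K_in_TUZ_mod: "k \<in> {1..n} \<Longrightarrow> Kg k \<in> TUZ_mod n i"
  using Tfree_in_TUZ_mod[OF UZ_K[OF swp_range], of k i] by (simp add: Tfree_g swp_swp)

lemma Kinv_in_TUZ_mod: "k \<in> {1..n} \<Longrightarrow> Kig k \<in> TUZ_mod n i"
  using Tfree_in_TUZ_mod[OF UZ_Kinv[OF swp_range], of k i] by (simp add: Tfree_g swp_swp)

lemma qbinK_in_TUZ_mod: "k \<in> {1..n} \<Longrightarrow> qbinK k t \<in> TUZ_mod n i"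
proof -
  assume "k \<in> {1..n}"
  then have "Tfree i (qbinK (swp i k) t) \<in> TUZ_mod n i"
    by (intro Tfree_in_TUZ_mod UZ_qbinK swp_range)
  then show ?thesis by (simp only: Tfree_qbinK swp_swp)
qed

lemma dpow_E_in_TUZ_mod:
  assumes j: "j \<in> {1..<n}"
  shows "dpow (Eg j) m \<in> TUZ_mod n i"
proof (cases rule: index_relation_cases[of j i])
  case self
  have "Tfree i (Kg (Suc i) * Kig i) \<in> TUZ_mod n i"
    by (intro Tfree_in_TUZ_mod UZ_mult UZ_K UZ_Kinv i_range)
  then have Kt: "Kt i \<in> TUZ_mod n i" by (simp only: Tfree_Kt)
  have T: "dpow (Tg i (GF i)) m \<in> TUZ_mod n i"
    using Tfree_in_TUZ_mod[OF UZ_dpow_F[OF i_range(3)], of i m] by (simp only: Tfree_dpow Tfree_g)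
  have "sc ((-1) ^ m) * (sc ((inverse vv * inverse vv) ^ (\<Sum>k<m. k))
          * (Kt i ^ m * dpow (Tg i (GF i)) m)) \<in> TUZ_mod n i"
    by (rule zclosed_smult[OF zclosed_TUZ_mod Zset_minus_1_power
          zclosed_smult[OF zclosed_TUZ_mod Zset_inverse_vv_square_power
            zclosed_mult[OF zclosed_TUZ_mod zclosed_power[OF zclosed_TUZ_mod Kt] T]]])
  from zclosed_cong[OF zclosed_TUZ_mod this dpow_E_self_cong] show ?thesis by (simp only: self)
next
  case adjacent
  then show ?thesis using dpow_E_adj_in_TUZ_mod[OF j] by blast
next
  case distant
  then show ?thesis
    using Tfree_in_TUZ_mod[OF UZ_dpow_E[OF j], of i m] by (simp add: Tfree_dpow Tfree_g)
qed

lemma dpow_F_in_TUZ_mod: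
  assumes j: "j \<in> {1..<n}"
  shows "dpow (Fg j) m \<in> TUZ_mod n i"
proof (cases rule: index_relation_cases[of j i])
  case self
  have "Tfree i (Kig (Suc i) * Kg i) \<in> TUZ_mod n i"
    by (intro Tfree_in_TUZ_mod UZ_mult UZ_K UZ_Kinv i_range)
  then have Kt_inv: "Kt_inv i \<in> TUZ_mod n i" by (simp only: Tfree_Kt_inv)
  have T: "dpow (Tg i (GE i)) m \<in> TUZ_mod n i"
    using Tfree_in_TUZ_mod[OF UZ_dpow_E[OF i_range(3)], of i m] by (simp only: Tfree_dpow Tfree_g)
  have "sc ((-1) ^ m) * (sc ((vv * vv) ^ (\<Sum>k<m. k))
          * (dpow (Tg i (GE i)) m * Kt_inv i ^ m)) \<in> TUZ_mod n i"
    by (rule zclosed_smult[OF zclosed_TUZ_mod Zset_minus_1_power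
          zclosed_smult[OF zclosed_TUZ_mod Zset_vv_square_power
            zclosed_mult[OF zclosed_TUZ_mod T zclosed_power[OF zclosed_TUZ_mod Kt_inv]]]])
  from zclosed_cong[OF zclosed_TUZ_mod this dpow_F_self_cong] show ?thesis by (simp only: self)
next
  case adjacent
  then show ?thesis using dpow_F_adj_in_TUZ_mod[OF j] by blast
next
  case distant
  then show ?thesis
    using Tfree_in_TUZ_mod[OF UZ_dpow_F[OF j], of i m] by (simp add: Tfree_dpow Tfree_g)
qed

lemma E_in_TUZ_mod: "j \<in> {1..<n} \<Longrightarrow> Eg j \<in> TUZ_mod n i"
  using dpow_E_in_TUZ_mod[of j 1] by simp

lemma F_in_TUZ_mod: "j \<in> {1..<n} \<Longrightarrow> Fg j \<in> TUZ_mod n i"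
  using dpow_F_in_TUZ_mod[of j 1] by simp

text \<open>\<open>K_{bar i}\<close> is read off from the formula for \<open>T_i(K_{bar(i+1)})\<close>.\<close>
lemma Kbar_in_TUZ_mod:
  assumes k: "k \<in> {1..n}"
  shows "Kbg k \<in> TUZ_mod n i"
proof -
  have Kbar_Suc: "Kbg (Suc i) \<in> TUZ_mod n i"
    using Tfree_in_TUZ_mod[OF UZ_Kbar[OF i_range(1)], of i] by (simp add: Tfree_g)
  have "Kbg i = Tfree i (Kbg (Suc i)) - sc (vv - inverse vv) * Kbg (Suc i) * Fg i * Eg i
                + sc (vv - inverse vv) * Fg i * Eg i * Kbg (Suc i)"
    by (simp add: Tfree_g)
  also have "\<dots> \<in> TUZ_mod n i"
    by (simp only: mult.assoc)
       (intro zclosed_add[OF zclosed_TUZ_mod] zclosed_diff[OF zclosed_TUZ_mod]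
          zclosed_vv_diff_inverse[OF zclosed_TUZ_mod] zclosed_mult[OF zclosed_TUZ_mod]
          Tfree_in_TUZ_mod UZ_Kbar i_range Kbar_Suc E_in_TUZ_mod F_in_TUZ_mod)
  finally have "Kbg i \<in> TUZ_mod n i" .
  with Kbar_Suc k show ?thesis
    using Tfree_in_TUZ_mod[OF UZ_Kbar[OF k], of i] by (cases "k = i \<or> k = Suc i") (auto simp: Tfree_g)
qed

text \<open>By (QQ3), \<open>E_{bar j} \<equiv> (K_{bar j} E_j - v E_j K_{bar j}) K_j\<close> and
  \<open>F_{bar j} \<equiv> -(K_{bar j} F_j - v F_j K_{bar j}) K_j^-1\<close> modulo \<open>I\<close>.\<close>
lemma Ebar_in_TUZ_mod:
  assumes j: "j \<in> {1..<n}"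
  shows "Ebg j \<in> TUZ_mod n i"
proof -
  have jn: "j \<in> {1..n}" using j by auto
  let ?Z = "Kbg j * Eg j - sc vv * Eg j * Kbg j"
  have "rel_cong n ?Z (Ebg j * Kig j)"
    using rel_Kbar_E[OF j] unfolding rel_cong_def by (simp add: algebra_simps)
  then have "rel_cong n (?Z * Kg j) (Ebg j * (Kig j * Kg j))"
    using rel_cong_mult_right by (simp only: mult.assoc[symmetric])
  also have "rel_cong n \<dots> (Ebg j * 1)" by (intro rel_cong_mult_left rel_Kinv_K jn)
  finally have cong: "rel_cong n (?Z * Kg j) (Ebg j)" by simp
  have "?Z * Kg j \<in> TUZ_mod n i"
    by (simp only: mult.assoc)
       (intro zclosed_diff[OF zclosed_TUZ_mod] zclosed_mult[OF zclosed_TUZ_mod]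
          zclosed_smult[OF zclosed_TUZ_mod] Kbar_in_TUZ_mod E_in_TUZ_mod K_in_TUZ_mod jn j Zset_vv)
  with cong show ?thesis using zclosed_cong[OF zclosed_TUZ_mod] by blast
qed

lemma Fbar_in_TUZ_mod:
  assumes j: "j \<in> {1..<n}"
  shows "Fbg j \<in> TUZ_mod n i"
proof -
  have jn: "j \<in> {1..n}" using j by auto
  let ?Z = "- (Kbg j * Fg j - sc vv * Fg j * Kbg j)"
  have "rel_cong n ?Z (Fbg j * Kg j)"
    using rel_cong_uminus[OF rel_Kbar_F[OF j]] unfolding rel_cong_def by (simp add: algebra_simps)
  then have "rel_cong n (?Z * Kig j) (Fbg j * (Kg j * Kig j))"
    using rel_cong_mult_right by (simp only: mult.assoc[symmetric])
  also have "rel_cong n \<dots> (Fbg j * 1)" by (intro rel_cong_mult_left rel_K_Kinv jn)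
  finally have cong: "rel_cong n (?Z * Kig j) (Fbg j)" by simp
  have "?Z * Kig j \<in> TUZ_mod n i"
    by (simp only: mult.assoc)
       (intro zclosed_mult[OF zclosed_TUZ_mod] zclosed_uminus[OF zclosed_TUZ_mod]
          zclosed_diff[OF zclosed_TUZ_mod] zclosed_smult[OF zclosed_TUZ_mod]
          Kbar_in_TUZ_mod F_in_TUZ_mod Kinv_in_TUZ_mod jn j Zset_vv)
  with cong show ?thesis using zclosed_cong[OF zclosed_TUZ_mod] by blast
qed

lemma UZ_gen_in_TUZ_mod: "s \<in> UZ_gens n \<Longrightarrow> s \<in> TUZ_mod n i"
  by (erule UZ_gens_cases)
     (auto intro: K_in_TUZ_mod Kinv_in_TUZ_mod Kbar_in_TUZ_mod qbinK_in_TUZ_mod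
        Ebar_in_TUZ_mod Fbar_in_TUZ_mod dpow_E_in_TUZ_mod dpow_F_in_TUZ_mod)

end

theorem lemma3p1:
  fixes n i :: nat
  assumes "1 \<le> i" and "i < n"
  shows "{Tfree i x + y | x y. x \<in> UZ n \<and> y \<in> rel_ideal n}
       = {x + y | x y. x \<in> UZ n \<and> y \<in> rel_ideal n}"
  using Tfree_UZ_gen_in_UZ_mod[OF assms] UZ_gen_in_TUZ_mod[OF assms]
  by (rule Tfree_UZ_mod_eq_if_generators)

end
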